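(* Let $\Omega\subset\mathbb{R}^3$ be a MAC compatible bounded domain, $(\mathcal M_n,\mathcal E_n)_{n\in\mathbb{N}}$ a sequence of MAC grids of $\Omega$ with $h_{\mathcal M_n}\to0$ and $\eta_{\mathcal M_n}\ge\eta>0$ for all $n$, and $1\le q<\infty$. Let $i,j\in\{1,2,3\}$ and $v\in L^q(\Omega)$. (a) If $v_n\in H^{(i)}_{\mathcal E_n,0}$ and $v_n\to v$ in $L^q(\Omega)$, then $\mathcal R^{(i,j)}_{\mathcal E_n}v_n\to v$ in $L^q(\Omega)$. (b) If $v_n\in H^{(i)}_{\mathcal E_n}$ and $v_n\to v$ in $L^q(\Omega)$, then $\mathcal R^{(i)}_{\mathcal M_n}v_n\to v$ in $L^q(\Omega)$.
   Context: MAC compatible domain: bounded connected open $\Omega$ whose closure is a finite union of closed rectangular parallelepipeds with faces orthogonal to $\boldsymbol e_1,\boldsymbol e_2,\boldsymbol e_3$. MAC grid $(\mathcal M,\mathcal E)$: structured partition $\mathcal M$ of $\Omega$ into rectangular parallelepipeds $K$; faces $\mathcal E$, $\mathcal E(K)$ faces of $K$, $\mathcal E^{(i)}$ faces orthogonal to $\boldsymbol e_i$ ($\mathcal E^{(i)}_{\rm int}$ interior ones); $\sigma=K|L$ common face; $D_{K,\sigma}$ half of $K$ adjacent to $\sigma$; dual cell $D_\sigma=D_{K,\sigma}\cup D_{L,\sigma}$ (interior) or $D_{K,\sigma}$ (boundary). $h_{\mathcal M}=\max\operatorname{diam}K$; $\eta_{\mathcal M}=\frac1{h_{\mathcal M}}\min_K\min_i\{|\boldsymbol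 x_\sigma-\boldsymbol x_{\sigma'}|:\sigma\ne\sigma'\in\mathcal E^{(i)}\cap\mathcal E(K)\}$ with $\boldsymbol x_\sigma$ the face mass centre. $L_{\mathcal M}$: piecewise constants on cells; $H^{(i)}_{\mathcal E}$: piecewise constants on $D_\sigma$, $\sigma\in\mathcal E^{(i)}$ (values $v_\sigma$); $H^{(i)}_{\mathcal E,0}$: those vanishing on boundary dual cells. Operators: $\mathcal R^{(i,j)}_{\mathcal E}:H^{(i)}_{\mathcal E,0}\to H^{(j)}_{\mathcal E,0}$, $\mathcal R^{(i,j)}_{\mathcal E}v=\sum_{\sigma\in\mathcal E^{(j)}_{\rm int}}(\mathcal R^{(i,j)}_{\mathcal E}v)_\sigma\mathbb 1_{D_\sigma}$ with $(\mathcal R^{(i,i)}_{\mathcal E}v)_\sigma=v_\sigma$ and, for $j\neq i$, $\sigma=K|L\in\mathcal E^{(j)}_{\rm int}$, $(\mathcal R^{(i,j)}_{\mathcal E}v)_\sigma=\frac14\sum\{v_{\sigma'}:\sigma'\in\mathcal E^{(i)}\cap(\mathcal E(K)\cup\mathcal E(L))\}$. $\mathcal R^{(i)}_{\mathcal M}:H^{(i)}_{\mathcal E}\to L_{\mathcal M}$, $(\mathcal R^{(i)}_{\mathcal M}v)|_K=\frac12\sum_{\sigma\in\mathcal E^{(i)}\cap\mathcal E(K)}v_\sigma$. *)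

theory Defs
  imports "HOL-Analysis.Analysis"
begin

definition MAC_compatible :: "(real^3) set \<Rightarrow> bool" where
  "MAC_compatible \<Omega> \<longleftrightarrow> open \<Omega> \<and> bounded \<Omega> \<and> connected \<Omega> \<and>
     (\<exists>B. finite B \<and> (\<forall>(a,b)\<in>B. \<forall>k. a$k < b$k) \<and>
          closure \<Omega> = (\<Union>(a,b)\<in>B. cbox a b))"

text \<open>A structured (tensor-product) grid: in direction k the grid nodes are
  gx k 0 < gx k 1 < ... < gx k (gN k).  Faces orthogonal to e_i are indexed by f :: 3 => nat where f i is a
  node index in direction i and f k (k ~= i) are cell indices.\<close>

record grid =
  gN :: "3 \<Rightarrow> nat"
  gx :: "3 \<Rightarrow> nat \<Rightarrow> real"

definition cell_ok :: "grid \<Rightarrow> (3 \<Rightarrow> nat) \<Rightarrow> bool" where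
  "cell_ok G c \<longleftrightarrow> (\<forall>k. c k < gN G k)"

definition cellbox :: "grid \<Rightarrow> (3 \<Rightarrow> nat) \<Rightarrow> (real^3) set" where
  "cellbox G c = {x. \<forall>k. gx G k (c k) < x$k \<and> x$k < gx G k (Suc (c k))}"

definition cellcbox :: "grid \<Rightarrow> (3 \<Rightarrow> nat) \<Rightarrow> (real^3) set" where
  "cellcbox G c = {x. \<forall>k. gx G k (c k) \<le> x$k \<and> x$k \<le> gx G k (Suc (c k))}"

definition mesh :: "(real^3) set \<Rightarrow> grid \<Rightarrow> (3 \<Rightarrow> nat) set" where
  "mesh \<Omega> G = {c. cell_ok G c \<and> cellbox G c \<subseteq> \<Omega>}"

definition is_MAC_grid :: "(real^3) set \<Rightarrow> grid \<Rightarrow> bool" where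
  "is_MAC_grid \<Omega> G \<longleftrightarrow> (\<forall>k. 1 \<le> gN G k \<and> strict_mono_on {0..gN G k} (gx G k)) \<and>
     closure \<Omega> = (\<Union>c\<in>mesh \<Omega> G. cellcbox G c)"

definition hM :: "(real^3) set \<Rightarrow> grid \<Rightarrow> real" where
  "hM \<Omega> G = Max ((\<lambda>c. diameter (cellbox G c)) ` mesh \<Omega> G)"

definition face_centre :: "grid \<Rightarrow> (3 \<Rightarrow> nat) \<Rightarrow> 3 \<Rightarrow> nat \<Rightarrow> real^3" where
  "face_centre G c k p =
     (\<chi> l. if l = k then gx G k p else (gx G l (c l) + gx G l (Suc (c l))) / 2)"

definition etaM :: "(real^3) set \<Rightarrow> grid \<Rightarrow> real" where
  "etaM \<Omega> G = (1 / hM \<Omega> G) *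
     Min {dist (face_centre G c k (c k)) (face_centre G c k (Suc (c k))) | c k. c \<in> mesh \<Omega> G}"

text \<open>Faces orthogonal to e_i.  The cell on the negative side of face f is
  f(i := f i - 1) (exists only if f i > 0), the one on the positive side is f.\<close>
definition has_low :: "(real^3) set \<Rightarrow> grid \<Rightarrow> 3 \<Rightarrow> (3 \<Rightarrow> nat) \<Rightarrow> bool" where
  "has_low \<Omega> G i f \<longleftrightarrow> 0 < f i \<and> f(i := f i - 1) \<in> mesh \<Omega> G"

definition has_up :: "(real^3) set \<Rightarrow> grid \<Rightarrow> 3 \<Rightarrow> (3 \<Rightarrow> nat) \<Rightarrow> bool" where
  "has_up \<Omega> G i f \<longleftrightarrow> f \<in> mesh \<Omega> G"

definition faces :: "(real^3) set \<Rightarrow> grid \<Rightarrow> 3 \<Rightarrow> (3 \<Rightarrow> nat) set" where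
  "faces \<Omega> G i = {f. has_low \<Omega> G i f \<or> has_up \<Omega> G i f}"

definition int_faces :: "(real^3) set \<Rightarrow> grid \<Rightarrow> 3 \<Rightarrow> (3 \<Rightarrow> nat) set" where
  "int_faces \<Omega> G i = {f. has_low \<Omega> G i f \<and> has_up \<Omega> G i f}"

definition midc :: "grid \<Rightarrow> (3 \<Rightarrow> nat) \<Rightarrow> 3 \<Rightarrow> real" where
  "midc G c i = (gx G i (c i) + gx G i (Suc (c i))) / 2"

definition dual :: "(real^3) set \<Rightarrow> grid \<Rightarrow> 3 \<Rightarrow> (3 \<Rightarrow> nat) \<Rightarrow> (real^3) set" where
  "dual \<Omega> G i f =
     (if has_low \<Omega> G i f then {x \<in> cellbox G (f(i := f i - 1)). midc G (f(i := f i - 1)) i < x$i}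
      else {}) \<union>
     (if has_up \<Omega> G i f then {x \<in> cellbox G f. x$i < midc G f i} else {})"

text \<open>Element of H^(i)_E with face values u.\<close>
definition disc_fun :: "(real^3) set \<Rightarrow> grid \<Rightarrow> 3 \<Rightarrow> ((3 \<Rightarrow> nat) \<Rightarrow> real) \<Rightarrow> real^3 \<Rightarrow> real" where
  "disc_fun \<Omega> G i u x = (\<Sum>f\<in>faces \<Omega> G i. u f * indicator (dual \<Omega> G i f) x)"

definition in_H0 :: "(real^3) set \<Rightarrow> grid \<Rightarrow> 3 \<Rightarrow> ((3 \<Rightarrow> nat) \<Rightarrow> real) \<Rightarrow> bool" where
  "in_H0 \<Omega> G i u \<longleftrightarrow> (\<forall>f\<in>faces \<Omega> G i - int_faces \<Omega> G i. u f = 0)"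

text \<open>Face values of R^(i,j)_E u on sigma = K|L in E^(j)_int, K = f(j := f j - 1), L = f;
  the four faces of K and L orthogonal to e_i are indexed by K, K(i:=K i+1), L, L(i:=L i+1).\<close>
definition R_EE_val :: "3 \<Rightarrow> 3 \<Rightarrow> ((3 \<Rightarrow> nat) \<Rightarrow> real) \<Rightarrow> (3 \<Rightarrow> nat) \<Rightarrow> real" where
  "R_EE_val i j u f =
     (if i = j then u f
      else (let K = f(j := f j - 1); L = f in
             (u K + u (K(i := Suc (K i))) + u L + u (L(i := Suc (L i)))) / 4))"

definition R_EE :: "(real^3) set \<Rightarrow> grid \<Rightarrow> 3 \<Rightarrow> 3 \<Rightarrow> ((3 \<Rightarrow> nat) \<Rightarrow> real) \<Rightarrow> real^3 \<Rightarrow> real" where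
  "R_EE \<Omega> G i j u x =
     (\<Sum>f\<in>int_faces \<Omega> G j. R_EE_val i j u f * indicator (dual \<Omega> G j f) x)"

definition R_M :: "(real^3) set \<Rightarrow> grid \<Rightarrow> 3 \<Rightarrow> ((3 \<Rightarrow> nat) \<Rightarrow> real) \<Rightarrow> real^3 \<Rightarrow> real" where
  "R_M \<Omega> G i u x =
     (\<Sum>c\<in>mesh \<Omega> G. (u c + u (c(i := Suc (c i)))) / 2 * indicator (cellbox G c) x)"

definition in_Lq :: "(real^3) set \<Rightarrow> real \<Rightarrow> (real^3 \<Rightarrow> real) \<Rightarrow> bool" where
  "in_Lq \<Omega> q v \<longleftrightarrow> v \<in> borel_measurable (lebesgue_on \<Omega>) \<and>
     (\<integral>\<^sup>+x\<in>\<Omega>. ennreal (\<bar>v x\<bar> powr q) \<partial>lebesgue) < \<infinity>"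

definition Lq_conv :: "(real^3) set \<Rightarrow> real \<Rightarrow> (nat \<Rightarrow> real^3 \<Rightarrow> real) \<Rightarrow> (real^3 \<Rightarrow> real) \<Rightarrow> bool" where
  "Lq_conv \<Omega> q fs g \<longleftrightarrow>
     (\<lambda>n. \<integral>\<^sup>+x\<in>\<Omega>. ennreal (\<bar>fs n x - g x\<bar> powr q) \<partial>lebesgue) \<longlonglongrightarrow> 0"

end

theory Submission
  imports Defs
begin

text \<open>Both \<open>R_EE\<close> (for \<open>i \<noteq> j\<close>) and \<open>R_M\<close> are local averages: on each of the eight subcells
  of a cell they equal the mean of the values of \<open>v\<^sub>n\<close> on a few subcells within distance
  \<open>4 h\<^sub>M\<close>, whose volumes are comparable to that of the subcell because \<open>\<eta>\<^sub>M \<ge> \<eta>\<close>. Hence,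
  for a continuous \<open>\<phi>\<close> vanishing near \<open>\<partial>\<Omega>\<close> and oscillating by at most \<open>\<epsilon>\<close> on distances
  \<open>4 h\<^sub>M\<close>, Jensen's inequality gives
  \<open>\<parallel>R v\<^sub>n - \<phi>\<parallel>\<^sup>q \<le> 2\<^sup>q\<^sup>-\<^sup>1 (|\<Omega>| \<epsilon>\<^sup>q + (1 + 1/\<eta>) \<parallel>v\<^sub>n - \<phi>\<parallel>\<^sup>q)\<close>; subcells whose stencil leaves the
  mesh lie within \<open>h\<^sub>M\<close> of the boundary, where both \<open>R_EE\<close> and \<open>\<phi>\<close> vanish. Since such \<open>\<phi>\<close>
  are dense in \<open>L\<^sup>q(\<Omega>)\<close>, two triangle inequalities through \<open>\<phi>\<close> give \<open>R v\<^sub>n \<rightarrow> v\<close>.\<close>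

section \<open>Subcells of a MAC grid\<close>

definition cell_width :: "grid \<Rightarrow> (3 \<Rightarrow> nat) \<Rightarrow> 3 \<Rightarrow> real" where
  "cell_width G c k = gx G k (Suc (c k)) - gx G k (c k)"

definition cell_volume :: "grid \<Rightarrow> (3 \<Rightarrow> nat) \<Rightarrow> real" where
  "cell_volume G c = (\<Prod>k\<in>UNIV. cell_width G c k)"

text \<open>The cell is split at its midpoints into eight subcells; \<open>s k\<close> selects the upper
  half in direction \<open>k\<close>.\<close>

definition subcell :: "grid \<Rightarrow> (3 \<Rightarrow> nat) \<Rightarrow> (3 \<Rightarrow> bool) \<Rightarrow> (real^3) set" where
  "subcell G c s =
     box (\<chi> k. if s k then midc G c k else gx G k (c k))
         (\<chi> k. if s k then gx G k (Suc (c k)) else midc G c k)"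

definition subcells :: "(real^3) set \<Rightarrow> grid \<Rightarrow> ((3 \<Rightarrow> nat) \<times> (3 \<Rightarrow> bool)) set" where
  "subcells \<Omega> G = mesh \<Omega> G \<times> UNIV"

definition grid_planes :: "grid \<Rightarrow> (real^3) set" where
  "grid_planes G = (\<Union>k. \<Union>m\<in>{..gN G k}. {x. x$k = gx G k m}) \<union>
                   (\<Union>k. \<Union>m\<in>{..gN G k}. {x. x$k = (gx G k m + gx G k (Suc m)) / 2})"

lemma gx_mono:
  assumes "is_MAC_grid \<Omega> G" "m \<le> m'" "m' \<le> gN G k"
  shows "gx G k m \<le> gx G k m'"
  using assms unfolding is_MAC_grid_def
  by (meson atLeastAtMost_iff le0 order_trans strict_mono_on_leD)

lemma gx_strict_mono:
  assumes "is_MAC_grid \<Omega> G" "m < m'" "m' \<le> gN G k"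
  shows "gx G k m < gx G k m'"
  using assms unfolding is_MAC_grid_def strict_mono_on_def by auto

lemma mesh_cell_ok: "c \<in> mesh \<Omega> G \<Longrightarrow> cell_ok G c"
  unfolding mesh_def by auto

lemma cell_width_pos:
  assumes "is_MAC_grid \<Omega> G" "cell_ok G c"
  shows "cell_width G c k > 0"
  using gx_strict_mono[OF assms(1), of "c k" "Suc (c k)" k] assms(2)
  unfolding cell_width_def cell_ok_def by (simp add: Suc_leI)

lemma cell_volume_pos: "is_MAC_grid \<Omega> G \<Longrightarrow> cell_ok G c \<Longrightarrow> cell_volume G c > 0"
  unfolding cell_volume_def using cell_width_pos by (simp add: prod_pos)

lemma cellbox_eq_box: "cellbox G c = box (\<chi> k. gx G k (c k)) (\<chi> k. gx G k (Suc (c k)))"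
  unfolding cellbox_def by (auto simp: mem_box_cart)

lemma cellbox_subset_cellcbox: "cellbox G c \<subseteq> cellcbox G c"
  unfolding cellbox_def cellcbox_def by (auto simp: less_imp_le)

lemma cellbox_unique:
  assumes G: "is_MAC_grid \<Omega> G" and "cell_ok G c" "cell_ok G c'"
    and "x \<in> cellbox G c" "x \<in> cellbox G c'"
  shows "c = c'"
proof (rule ext, rule ccontr)
  fix k assume ne: "c k \<noteq> c' k"
  have x: "gx G k (c k) < x$k" "x$k < gx G k (Suc (c k))"
          "gx G k (c' k) < x$k" "x$k < gx G k (Suc (c' k))"
    using assms(4,5) unfolding cellbox_def by auto
  have "c k < gN G k" "c' k < gN G k" using assms(2,3) unfolding cell_ok_def by auto
  then have "gx G k (Suc (c k)) \<le> gx G k (c' k) \<or> gx G k (Suc (c' k)) \<le> gx G k (c k)"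
    using ne gx_mono[OF G, of "Suc (c k)" "c' k" k] gx_mono[OF G, of "Suc (c' k)" "c k" k]
    by (cases "c k < c' k") auto
  then show False using x by linarith
qed

lemma mem_subcell:
  "x \<in> subcell G c s \<longleftrightarrow> (\<forall>k. (if s k then midc G c k else gx G k (c k)) < x$k \<and>
       x$k < (if s k then gx G k (Suc (c k)) else midc G c k))"
  unfolding subcell_def by (simp add: mem_box_cart)

lemma subcell_side_iff:
  assumes "x \<in> subcell G c s"
  shows "s k \<longleftrightarrow> midc G c k < x$k"
  using assms[unfolded mem_subcell, rule_format, of k] by (auto split: if_splits)

lemma subcell_subset_cellbox:
  assumes "is_MAC_grid \<Omega> G" "cell_ok G c"
  shows "subcell G c s \<subseteq> cellbox G c"
proof
  fix x assume x: "x \<in> subcell G c s"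
  have "gx G k (c k) < midc G c k \<and> midc G c k < gx G k (Suc (c k))" for k
    using cell_width_pos[OF assms, of k] unfolding cell_width_def midc_def by auto
  then show "x \<in> cellbox G c"
    using x unfolding mem_subcell cellbox_def
    by (smt (verit, best) mem_Collect_eq)
qed

lemma subcell_subset_Omega:
  assumes "is_MAC_grid \<Omega> G" "c \<in> mesh \<Omega> G"
  shows "subcell G c s \<subseteq> \<Omega>"
  using subcell_subset_cellbox[OF assms(1) mesh_cell_ok] assms(2) unfolding mesh_def by blast

lemma subcell_subset_cellcbox:
  assumes "is_MAC_grid \<Omega> G" "c \<in> mesh \<Omega> G"
  shows "subcell G c s \<subseteq> cellcbox G c"
  using subcell_subset_cellbox[OF assms(1) mesh_cell_ok[OF assms(2)]] cellbox_subset_cellcbox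
  by blast

lemma mem_subcell_cellbox_iff:
  assumes G: "is_MAC_grid \<Omega> G" and "c \<in> mesh \<Omega> G" "c' \<in> mesh \<Omega> G" and "x \<in> subcell G c s"
  shows "x \<in> cellbox G c' \<longleftrightarrow> c' = c"
  using cellbox_unique[OF G] subcell_subset_cellbox[OF G] mesh_cell_ok assms(2-4) by blast

lemma subcell_unique:
  assumes G: "is_MAC_grid \<Omega> G" and "c \<in> mesh \<Omega> G" "c' \<in> mesh \<Omega> G"
    and x: "x \<in> subcell G c s" "x \<in> subcell G c' s'"
  shows "c = c' \<and> s = s'"
proof
  show "c = c'"
    using mem_subcell_cellbox_iff[OF G assms(2,3) x(1)] subcell_subset_cellbox[OF G]
      mesh_cell_ok[OF assms(3)] x(2)
    by blast
  then show "s = s'" using subcell_side_iff[OF x(1)] subcell_side_iff[OF x(2)] by auto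
qed

lemma finite_bounded_index_funs: "finite {f :: 3 \<Rightarrow> nat. \<forall>k. f k \<le> N k}"
proof -
  have "{f :: 3 \<Rightarrow> nat. \<forall>k. f k \<le> N k} = Pi\<^sub>E UNIV (\<lambda>k. {..N k})"
    by (auto simp: PiE_def Pi_def)
  then show ?thesis by (simp add: finite_PiE)
qed

lemma finite_mesh: "finite (mesh \<Omega> G)"
  by (rule finite_subset[OF _ finite_bounded_index_funs[of "gN G"]])
     (auto simp: mesh_def cell_ok_def less_imp_le)

lemma finite_subcells: "finite (subcells \<Omega> G)"
  unfolding subcells_def using finite_mesh by auto

lemma finite_faces: "finite (faces \<Omega> G i)"
proof (rule finite_subset[OF _ finite_bounded_index_funs[of "gN G"]], safe)
  fix f k assume "f \<in> faces \<Omega> G i"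
  then consider "0 < f i" "f(i := f i - 1) \<in> mesh \<Omega> G" | "f \<in> mesh \<Omega> G"
    unfolding faces_def has_low_def has_up_def by auto
  then show "f k \<le> gN G k"
  proof cases
    case 1
    then have "(f(i := f i - 1)) k < gN G k" unfolding mesh_def cell_ok_def by auto
    then show ?thesis by (cases "k = i") auto
  qed (simp add: mesh_def cell_ok_def less_imp_le)
qed

lemma finite_int_faces: "finite (int_faces \<Omega> G i)"
  by (rule finite_subset[OF _ finite_faces[of \<Omega> G i]]) (auto simp: int_faces_def faces_def)

lemma emeasure_box_cart:
  fixes a b :: "real^'n"
  assumes "\<And>k. a$k \<le> b$k"
  shows "emeasure lebesgue (box a b) = ennreal (\<Prod>k\<in>UNIV. b$k - a$k)"
proof -
  have "emeasure lebesgue (box a b) = emeasure lborel (box a b)" by simp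
  also have "\<dots> = ennreal (\<Prod>bb\<in>Basis. (b - a) \<bullet> bb)"
    by (rule emeasure_lborel_box)
       (use assms in \<open>auto simp: Basis_vec_def cart_eq_inner_axis[symmetric]\<close>)
  also have "(\<Prod>bb\<in>Basis. (b - a) \<bullet> bb) = (\<Prod>k\<in>UNIV. b$k - a$k)"
    by (simp add: Basis_vec_def cart_eq_inner_axis axis_eq_axis prod.UNION_disjoint inner_diff_left)
  finally show ?thesis .
qed

lemma emeasure_subcell:
  assumes "is_MAC_grid \<Omega> G" "cell_ok G c"
  shows "emeasure lebesgue (subcell G c s) = ennreal (cell_volume G c / 8)"
proof -
  have w: "cell_width G c k > 0" for k using cell_width_pos[OF assms] .
  have "emeasure lebesgue (subcell G c s) = ennreal (\<Prod>k\<in>UNIV. cell_width G c k / 2)"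
    unfolding subcell_def using w
    by (subst emeasure_box_cart)
       (auto intro!: arg_cong[where f = ennreal] prod.cong
             simp: midc_def cell_width_def field_simps less_imp_le)
  then show ?thesis by (simp add: cell_volume_def prod_dividef)
qed

lemma negligible_coordinate_planes:
  fixes N :: "'n::finite \<Rightarrow> nat" and t :: "'n \<Rightarrow> nat \<Rightarrow> real"
  shows "negligible (\<Union>k. \<Union>m\<in>{..N k}. {x::real^'n. x$k = t k m})"
proof -
  have "negligible {x::real^'n. x \<bullet> axis k 1 = r}" for k r
    by (rule negligible_standard_hyperplane) simp
  then have "negligible {x::real^'n. x$k = r}" for k r by (simp add: cart_eq_inner_axis)
  then show ?thesis by (intro negligible_Union) auto
qed

lemma negligible_grid_planes: "negligible (grid_planes G)"
  unfolding grid_planes_def by (intro negligible_Un negligible_coordinate_planes)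

lemma in_some_subcell:
  assumes G: "is_MAC_grid \<Omega> G" and x: "x \<in> \<Omega>" "x \<notin> grid_planes G"
  obtains c s where "c \<in> mesh \<Omega> G" "x \<in> subcell G c s"
proof -
  obtain c where c: "c \<in> mesh \<Omega> G" "x \<in> cellcbox G c"
    using G x(1) closure_subset unfolding is_MAC_grid_def by blast
  have "x \<in> subcell G c (\<lambda>k. midc G c k < x$k)"
    unfolding mem_subcell
  proof
    fix k
    have "c k < gN G k" using c(1) unfolding mesh_def cell_ok_def by auto
    then have "x$k \<noteq> gx G k (c k)" "x$k \<noteq> gx G k (Suc (c k))" "x$k \<noteq> midc G c k"
      using x(2) unfolding grid_planes_def midc_def by (auto simp: Suc_leI less_imp_le)
    moreover have "gx G k (c k) \<le> x$k" "x$k \<le> gx G k (Suc (c k))"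
      using c(2) unfolding cellcbox_def by auto
    ultimately show "(if midc G c k < x$k then midc G c k else gx G k (c k)) < x$k \<and>
        x$k < (if midc G c k < x$k then gx G k (Suc (c k)) else midc G c k)"
      by auto
  qed
  with c(1) show ?thesis using that by blast
qed

lemma indicator_eq_sum_subcells:
  assumes G: "is_MAC_grid \<Omega> G" and x: "x \<notin> grid_planes G"
  shows "(indicator \<Omega> x :: ennreal) = (\<Sum>p\<in>subcells \<Omega> G. indicator (subcell G (fst p) (snd p)) x)"
proof (cases "x \<in> \<Omega>")
  case True
  obtain c s where cs: "c \<in> mesh \<Omega> G" "x \<in> subcell G c s"
    using in_some_subcell[OF G True x] .
  have "indicator (subcell G (fst p) (snd p)) x = (if p = (c, s) then 1 else (0::ennreal))"
    if "p \<in> subcells \<Omega> G" for p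
    using that subcell_unique[OF G _ cs(1) _ cs(2)] cs(2)
    by (auto simp: subcells_def indicator_def)
  then show ?thesis
    using True cs(1) finite_subcells by (simp add: sum.delta' subcells_def cong: sum.cong)
next
  case False
  then show ?thesis
    using subcell_subset_Omega[OF G] by (force intro!: sum.neutral simp: indicator_def subcells_def)
qed

lemma set_nn_integral_eq_sum_subcells:
  assumes G: "is_MAC_grid \<Omega> G" and F: "F \<in> borel_measurable lebesgue"
  shows "(\<integral>\<^sup>+x\<in>\<Omega>. F x \<partial>lebesgue) =
     (\<Sum>p\<in>subcells \<Omega> G. \<integral>\<^sup>+x\<in>subcell G (fst p) (snd p). F x \<partial>lebesgue)"
proof -
  have "AE x in lebesgue. x \<notin> grid_planes G"
    using negligible_grid_planes by (intro AE_not_in) (simp add: negligible_iff_null_sets)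
  then have "(\<integral>\<^sup>+x\<in>\<Omega>. F x \<partial>lebesgue) =
        (\<integral>\<^sup>+x. (\<Sum>p\<in>subcells \<Omega> G. F x * indicator (subcell G (fst p) (snd p)) x) \<partial>lebesgue)"
    by (intro nn_integral_cong_AE) (auto elim!: eventually_mono
        simp: indicator_eq_sum_subcells[OF G] sum_distrib_left)
  also have "\<dots> = (\<Sum>p\<in>subcells \<Omega> G. \<integral>\<^sup>+x\<in>subcell G (fst p) (snd p). F x \<partial>lebesgue)"
    using F by (intro nn_integral_sum)
      (auto simp: subcell_def intro!: borel_measurable_times_ennreal borel_measurable_indicator)
  finally show ?thesis .
qed

lemma sum_emeasure_subcells:
  assumes "is_MAC_grid \<Omega> G" "\<Omega> \<in> sets lebesgue"
  shows "(\<Sum>p\<in>subcells \<Omega> G. emeasure lebesgue (subcell G (fst p) (snd p))) = emeasure lebesgue \<Omega>"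
  using set_nn_integral_eq_sum_subcells[OF assms(1), of "\<lambda>_. 1"] assms(2)
  by (simp add: subcell_def)

text \<open>The face orthogonal to \<open>e_d\<close> whose dual cell contains the subcell \<open>(c, s)\<close>.\<close>

definition subcell_face :: "(3 \<Rightarrow> nat) \<Rightarrow> (3 \<Rightarrow> bool) \<Rightarrow> 3 \<Rightarrow> (3 \<Rightarrow> nat)" where
  "subcell_face c s d = (if s d then c(d := Suc (c d)) else c)"

lemma mem_dual_iff:
  assumes G: "is_MAC_grid \<Omega> G" and c: "c \<in> mesh \<Omega> G" and x: "x \<in> subcell G c s"
  shows "x \<in> dual \<Omega> G d f \<longleftrightarrow> f = subcell_face c s d"
proof
  have side: "s d \<longleftrightarrow> midc G c d < x$d" using subcell_side_iff[OF x] .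
  assume "x \<in> dual \<Omega> G d f"
  then consider
      "has_low \<Omega> G d f" "x \<in> cellbox G (f(d := f d - 1))" "midc G (f(d := f d - 1)) d < x$d"
    | "has_up \<Omega> G d f" "x \<in> cellbox G f" "x$d < midc G f d"
    unfolding dual_def by (auto split: if_splits)
  then show "f = subcell_face c s d"
  proof cases
    case 1
    then have e: "f(d := f d - 1) = c" "f d > 0"
      using mem_subcell_cellbox_iff[OF G c _ x] unfolding has_low_def by blast+
    then have "f = c(d := Suc (c d))" by (auto simp: fun_eq_iff split: if_splits)
    moreover have "s d" using side 1(3) e by simp
    ultimately show ?thesis unfolding subcell_face_def by simp
  next
    case 2
    then have "f = c" using mem_subcell_cellbox_iff[OF G c _ x] unfolding has_up_def by blast
    then show ?thesis using side 2(3) unfolding subcell_face_def by simp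
  qed
next
  have xc: "x \<in> cellbox G c" using subcell_subset_cellbox[OF G mesh_cell_ok[OF c]] x by blast
  assume f: "f = subcell_face c s d"
  show "x \<in> dual \<Omega> G d f"
  proof (cases "s d")
    case True
    then have "f = c(d := Suc (c d))" using f unfolding subcell_face_def by simp
    then have "f(d := f d - 1) = c" by (auto simp: fun_eq_iff)
    moreover from this have "has_low \<Omega> G d f"
      using c \<open>f = c(d := Suc (c d))\<close> unfolding has_low_def by simp
    ultimately show ?thesis unfolding dual_def using xc subcell_side_iff[OF x] True by auto
  next
    case False
    then have "f = c" "has_up \<Omega> G d f" using f c unfolding subcell_face_def has_up_def by auto
    then show ?thesis
      unfolding dual_def using xc x[unfolded mem_subcell, rule_format, of d] False by auto
  qed
qed

lemma subcell_face_in_faces: "c \<in> mesh \<Omega> G \<Longrightarrow> subcell_face c s d \<in> faces \<Omega> G d"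
  unfolding subcell_face_def faces_def has_low_def has_up_def by (auto simp: fun_eq_iff)

lemma disc_fun_on_subcell:
  assumes "is_MAC_grid \<Omega> G" "c \<in> mesh \<Omega> G" "x \<in> subcell G c s"
  shows "disc_fun \<Omega> G i u x = u (subcell_face c s i)"
proof -
  have "disc_fun \<Omega> G i u x =
      (\<Sum>f\<in>faces \<Omega> G i. if f = subcell_face c s i then u (subcell_face c s i) else 0)"
    unfolding disc_fun_def
    by (rule sum.cong[OF refl]) (auto simp: indicator_def mem_dual_iff[OF assms])
  then show ?thesis using subcell_face_in_faces[OF assms(2)] finite_faces by (simp add: sum.delta')
qed

lemma R_EE_on_subcell:
  assumes "is_MAC_grid \<Omega> G" "c \<in> mesh \<Omega> G" "x \<in> subcell G c s"
  shows "R_EE \<Omega> G i j u x =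
    (if subcell_face c s j \<in> int_faces \<Omega> G j then R_EE_val i j u (subcell_face c s j) else 0)"
proof -
  have "R_EE \<Omega> G i j u x = (\<Sum>f\<in>int_faces \<Omega> G j.
      if f = subcell_face c s j then R_EE_val i j u (subcell_face c s j) else 0)"
    unfolding R_EE_def
    by (rule sum.cong[OF refl]) (auto simp: indicator_def mem_dual_iff[OF assms])
  then show ?thesis using finite_int_faces by (simp add: sum.delta')
qed

lemma R_M_on_subcell:
  assumes "is_MAC_grid \<Omega> G" "c \<in> mesh \<Omega> G" "x \<in> subcell G c s"
  shows "R_M \<Omega> G i u x = (u c + u (c(i := Suc (c i)))) / 2"
proof -
  have "R_M \<Omega> G i u x =
      (\<Sum>c'\<in>mesh \<Omega> G. if c' = c then (u c + u (c(i := Suc (c i)))) / 2 else 0)"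
    unfolding R_M_def
    by (rule sum.cong[OF refl]) (auto simp: indicator_def mem_subcell_cellbox_iff[OF assms(1,2) _ assms(3)])
  then show ?thesis using finite_mesh assms(2) by (simp add: sum.delta')
qed

lemma R_EE_same_direction:
  assumes "in_H0 \<Omega> G i u"
  shows "R_EE \<Omega> G i i u = disc_fun \<Omega> G i u"
proof
  fix x
  have "R_EE \<Omega> G i i u x = (\<Sum>f\<in>int_faces \<Omega> G i. u f * indicator (dual \<Omega> G i f) x)"
    unfolding R_EE_def R_EE_val_def by simp
  also have "\<dots> = (\<Sum>f\<in>faces \<Omega> G i. u f * indicator (dual \<Omega> G i f) x)"
    by (rule sum.mono_neutral_left[OF finite_faces])
       (use assms in \<open>auto simp: int_faces_def faces_def in_H0_def\<close>)
  finally show "R_EE \<Omega> G i i u x = disc_fun \<Omega> G i u x" unfolding disc_fun_def .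
qed

lemma open_dual: "open (dual \<Omega> G i f)"
proof -
  have "open {x::real^3. m < x$i}" "open {x::real^3. x$i < m}" for m
    by (intro open_Collect_less continuous_intros)+
  moreover have "{x \<in> cellbox G c. m < x$i} = cellbox G c \<inter> {x. m < x$i}"
    "{x \<in> cellbox G c. x$i < m} = cellbox G c \<inter> {x. x$i < m}" for c m by auto
  ultimately show ?thesis
    unfolding dual_def by (auto intro!: open_Un open_Int simp: cellbox_eq_box open_box)
qed

lemma open_imp_sets_lebesgue: "open (S :: 'a::euclidean_space set) \<Longrightarrow> S \<in> sets lebesgue"
  by simp

lemma borel_measurable_disc_fun: "disc_fun \<Omega> G i u \<in> borel_measurable lebesgue"
  unfolding disc_fun_def
  by (intro borel_measurable_sum borel_measurable_times borel_measurable_const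
      borel_measurable_indicator open_imp_sets_lebesgue open_dual)

lemma borel_measurable_R_EE: "R_EE \<Omega> G i j u \<in> borel_measurable lebesgue"
  unfolding R_EE_def
  by (intro borel_measurable_sum borel_measurable_times borel_measurable_const
      borel_measurable_indicator open_imp_sets_lebesgue open_dual)

lemma borel_measurable_R_M: "R_M \<Omega> G i u \<in> borel_measurable lebesgue"
  unfolding R_M_def
  by (intro borel_measurable_sum borel_measurable_times borel_measurable_const
      borel_measurable_indicator open_imp_sets_lebesgue) (simp add: cellbox_eq_box open_box)

section \<open>Mesh size, mesh regularity and the boundary\<close>

lemma mesh_nonempty: "is_MAC_grid \<Omega> G \<Longrightarrow> \<Omega> \<noteq> {} \<Longrightarrow> mesh \<Omega> G \<noteq> {}"
  unfolding is_MAC_grid_def using closure_subset by fastforce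

lemma cell_width_le_diameter:
  assumes G: "is_MAC_grid \<Omega> G" and c: "cell_ok G c"
  shows "cell_width G c k \<le> diameter (cellbox G c)"
proof -
  define a b :: "real^3" where "a = (\<chi> k. gx G k (c k))" and "b = (\<chi> k. gx G k (Suc (c k)))"
  have w: "\<And>k. cell_width G c k > 0" using cell_width_pos[OF G c] .
  have le: "\<forall>i\<in>Basis. a \<bullet> i \<le> b \<bullet> i"
    using w by (auto simp: Basis_vec_def cart_eq_inner_axis[symmetric] a_def b_def
        cell_width_def less_imp_le)
  have ne: "box a b \<noteq> {}"
    using w by (auto simp: box_ne_empty Basis_vec_def cart_eq_inner_axis[symmetric]
        a_def b_def cell_width_def)
  have "diameter (cellbox G c) = diameter (closure (box a b))"
    by (simp add: cellbox_eq_box a_def b_def diameter_closure)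
  also have "\<dots> = norm (a - b)"
    using ne le by (simp add: diameter_cbox dist_norm)
  finally have "diameter (cellbox G c) = norm (a - b)" .
  moreover have "\<bar>(a - b) $ k\<bar> \<le> norm (a - b)" by (rule component_le_norm_cart)
  ultimately show ?thesis using w[of k] by (simp add: a_def b_def cell_width_def)
qed

lemma cell_width_le_hM:
  assumes G: "is_MAC_grid \<Omega> G" and c: "c \<in> mesh \<Omega> G"
  shows "cell_width G c k \<le> hM \<Omega> G"
proof -
  have "diameter (cellbox G c) \<le> hM \<Omega> G"
    unfolding hM_def by (rule Max_ge) (use c finite_mesh in auto)
  then show ?thesis using cell_width_le_diameter[OF G mesh_cell_ok[OF c], of k] by linarith
qed

lemma hM_pos:
  assumes G: "is_MAC_grid \<Omega> G" and "\<Omega> \<noteq> {}"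
  shows "hM \<Omega> G > 0"
proof -
  obtain c where c: "c \<in> mesh \<Omega> G" using mesh_nonempty[OF assms] by blast
  show ?thesis
    using cell_width_pos[OF G mesh_cell_ok[OF c], of 0] cell_width_le_hM[OF G c, of 0] by linarith
qed

lemma dist_face_centres:
  "dist (face_centre G c k (c k)) (face_centre G c k (Suc (c k))) = \<bar>cell_width G c k\<bar>"
proof -
  let ?v = "face_centre G c k (c k) - face_centre G c k (Suc (c k))"
  have "norm ?v \<le> (\<Sum>i\<in>UNIV. \<bar>?v $ i\<bar>)" by (rule norm_le_l1_cart)
  also have "(\<Sum>i\<in>UNIV. \<bar>?v $ i\<bar>) = (\<Sum>i\<in>UNIV. if i = k then \<bar>cell_width G c k\<bar> else 0)"
    by (rule sum.cong) (auto simp: face_centre_def cell_width_def)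
  finally have "norm ?v \<le> \<bar>cell_width G c k\<bar>" by simp
  moreover have "\<bar>?v $ k\<bar> \<le> norm ?v" by (rule component_le_norm_cart)
  then have "\<bar>cell_width G c k\<bar> \<le> norm ?v" by (simp add: face_centre_def cell_width_def)
  ultimately show ?thesis by (simp add: dist_norm)
qed

lemma eta_hM_le_cell_width:
  assumes G: "is_MAC_grid \<Omega> G" and ne: "\<Omega> \<noteq> {}" and c: "c \<in> mesh \<Omega> G"
    and eta: "etaM \<Omega> G \<ge> \<eta>"
  shows "\<eta> * hM \<Omega> G \<le> cell_width G c k"
proof -
  define S where "S = {dist (face_centre G c k (c k)) (face_centre G c k (Suc (c k))) | c k.
    c \<in> mesh \<Omega> G}"
  have "S = (\<lambda>(c,k). dist (face_centre G c k (c k)) (face_centre G c k (Suc (c k)))) `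
      (mesh \<Omega> G \<times> UNIV)"
    unfolding S_def by auto
  then have "finite S" using finite_mesh by simp
  moreover have "cell_width G c k \<in> S"
    unfolding S_def using c dist_face_centres cell_width_pos[OF G mesh_cell_ok[OF c], of k]
    by (metis (mono_tags, lifting) abs_of_pos mem_Collect_eq)
  ultimately have "Min S \<le> cell_width G c k" by simp
  moreover have "\<eta> * hM \<Omega> G \<le> Min S"
    using eta hM_pos[OF G ne] unfolding etaM_def S_def by (simp add: pos_le_divide_eq)
  ultimately show ?thesis by linarith
qed

lemma cell_volume_eq_width_mult:
  "cell_volume G c = cell_width G c j * (\<Prod>k\<in>UNIV - {j}. cell_width G c k)"
  unfolding cell_volume_def by (simp add: prod.remove[of UNIV j])

lemma eta_cell_volume_le_neighbour:
  assumes G: "is_MAC_grid \<Omega> G" and ne: "\<Omega> \<noteq> {}" and eta: "etaM \<Omega> G \<ge> \<eta>"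
    and c: "c \<in> mesh \<Omega> G" and c': "c' \<in> mesh \<Omega> G" and same: "\<And>k. k \<noteq> j \<Longrightarrow> c' k = c k"
  shows "\<eta> * cell_volume G c \<le> cell_volume G c'"
proof -
  have rest: "(\<Prod>k\<in>UNIV - {j}. cell_width G c k) = (\<Prod>k\<in>UNIV - {j}. cell_width G c' k)"
    by (rule prod.cong) (auto simp: cell_width_def same)
  have pos: "cell_volume G c > 0" "cell_volume G c' > 0"
    using cell_volume_pos[OF G] mesh_cell_ok c c' by auto
  have "cell_volume G c * (\<eta> * hM \<Omega> G) \<le> cell_volume G c * cell_width G c' j"
    using eta_hM_le_cell_width[OF G ne c' eta] pos by (intro mult_left_mono) auto
  also have "\<dots> = cell_volume G c' * cell_width G c j"
    using rest cell_volume_eq_width_mult[of G c j] cell_volume_eq_width_mult[of G c' j] by simp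
  also have "\<dots> \<le> cell_volume G c' * hM \<Omega> G"
    using cell_width_le_hM[OF G c] pos by (intro mult_left_mono) auto
  finally have "(\<eta> * cell_volume G c) * hM \<Omega> G \<le> cell_volume G c' * hM \<Omega> G"
    by (simp add: mult_ac)
  then show ?thesis using hM_pos[OF G ne] by simp
qed

lemma dist_le_sum_abs_components: "dist x y \<le> (\<Sum>k\<in>UNIV. \<bar>x$k - y$k\<bar>)"
  unfolding dist_norm using norm_le_l1_cart[of "x - y"] by simp

lemma dist_adjacent_cells_le:
  assumes G: "is_MAC_grid \<Omega> G" and c: "c \<in> mesh \<Omega> G" and c': "c' \<in> mesh \<Omega> G"
    and x: "x \<in> cellcbox G c" and y: "y \<in> cellcbox G c'"
    and same: "\<And>k. k \<noteq> j \<Longrightarrow> c' k = c k"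
    and adjacent: "c' j = c j \<or> c' j = Suc (c j) \<or> Suc (c' j) = c j"
  shows "dist x y \<le> 4 * hM \<Omega> G"
proof -
  have bound: "\<bar>x$k - y$k\<bar> \<le> (if k = j then 2 * hM \<Omega> G else hM \<Omega> G)" for k
  proof -
    have ok: "c k < gN G k" "c' k < gN G k" using c c' unfolding mesh_def cell_ok_def by auto
    have a: "gx G k (c k) \<le> x$k" "x$k \<le> gx G k (Suc (c k))"
      and b: "gx G k (c' k) \<le> y$k" "y$k \<le> gx G k (Suc (c' k))"
      using x y unfolding cellcbox_def by auto
    show ?thesis
    proof (cases "k = j")
      case True
      have "gx G k (c' k) \<le> gx G k (Suc (c k))"
        using adjacent True gx_mono[OF G, of "c' k" "Suc (c k)" k] ok by (auto simp: Suc_leI)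
      moreover have "gx G k (c k) \<le> gx G k (Suc (c' k))"
        using adjacent True gx_mono[OF G, of "c k" "Suc (c' k)" k] ok by (auto simp: Suc_leI)
      ultimately have "\<bar>x$k - y$k\<bar> \<le> cell_width G c k + cell_width G c' k"
        unfolding abs_le_iff cell_width_def using a b by (intro conjI; linarith)
      then show ?thesis
        using cell_width_le_hM[OF G c, of k] cell_width_le_hM[OF G c', of k] True by simp
    next
      case False
      then have "\<bar>x$k - y$k\<bar> \<le> cell_width G c k"
        unfolding abs_le_iff cell_width_def using a b same[of k] by (intro conjI; simp; linarith)
      then show ?thesis using cell_width_le_hM[OF G c, of k] False by simp
    qed
  qed
  have "dist x y \<le> (\<Sum>k\<in>UNIV. \<bar>x$k - y$k\<bar>)" by (rule dist_le_sum_abs_components)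
  also have "\<dots> \<le> (\<Sum>k\<in>UNIV. (if k = j then 2 * hM \<Omega> G else hM \<Omega> G))"
    by (rule sum_mono) (rule bound)
  also have "\<dots> = 4 * hM \<Omega> G"
  proof -
    have "card (- {j::3}) = 2" by (simp add: Compl_eq_Diff_UNIV card_Diff_singleton)
    then show ?thesis by (simp add: sum.remove[of UNIV j] sum.If_cases)
  qed
  finally show ?thesis .
qed

lemma not_in_Omega_beyond_grid:
  assumes G: "is_MAC_grid \<Omega> G" and y: "y$j > gx G j (gN G j) \<or> y$j < gx G j 0"
  shows "y \<notin> \<Omega>"
proof
  assume "y \<in> \<Omega>"
  then obtain c where c: "c \<in> mesh \<Omega> G" "y \<in> cellcbox G c"
    using G closure_subset unfolding is_MAC_grid_def by blast
  have "c j < gN G j" using c unfolding mesh_def cell_ok_def by auto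
  then have "gx G j (Suc (c j)) \<le> gx G j (gN G j)" "gx G j 0 \<le> gx G j (c j)"
    using gx_mono[OF G, of "Suc (c j)" "gN G j" j] gx_mono[OF G, of 0 "c j" j] by auto
  moreover have "gx G j (c j) \<le> y$j" "y$j \<le> gx G j (Suc (c j))"
    using c(2) unfolding cellcbox_def by auto
  ultimately show False using y by linarith
qed

lemma cellbox_Int_Omega_empty:
  assumes G: "is_MAC_grid \<Omega> G" and "open \<Omega>" and N: "cell_ok G N" "N \<notin> mesh \<Omega> G"
  shows "cellbox G N \<inter> \<Omega> = {}"
proof (rule ccontr)
  assume "cellbox G N \<inter> \<Omega> \<noteq> {}"
  moreover have "open (cellbox G N \<inter> \<Omega>)" using assms(2) by (simp add: cellbox_eq_box open_Int open_box)
  ultimately have "\<not> cellbox G N \<inter> \<Omega> \<subseteq> grid_planes G"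
    using open_not_negligible negligible_grid_planes negligible_subset by blast
  then obtain z where z: "z \<in> cellbox G N" "z \<in> \<Omega>" "z \<notin> grid_planes G" by blast
  obtain c s where cs: "c \<in> mesh \<Omega> G" "z \<in> subcell G c s" using in_some_subcell[OF G z(2,3)] .
  then have "z \<in> cellbox G c" using subcell_subset_cellbox[OF G mesh_cell_ok] by blast
  then have "N = c" using cellbox_unique[OF G N(1) mesh_cell_ok[OF cs(1)] z(1)] by simp
  then show False using N cs(1) by simp
qed

lemma dist_le_abs_component:
  fixes x y :: "real^'n"
  assumes "\<And>l. l \<noteq> j \<Longrightarrow> y$l = x$l"
  shows "dist x y \<le> \<bar>x$j - y$j\<bar>"
proof -
  have "dist x y \<le> (\<Sum>l\<in>UNIV. \<bar>(x - y)$l\<bar>)" unfolding dist_norm by (rule norm_le_l1_cart)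
  also have "\<dots> = (\<Sum>l\<in>UNIV. if l = j then \<bar>x$j - y$j\<bar> else 0)"
    by (rule sum.cong) (use assms in auto)
  finally show ?thesis by simp
qed

text \<open>A point of a cell lies within one cell width of points across a boundary face of the
  cell, and those lie in a cell outside the mesh or beyond the grid, hence outside \<open>\<Omega>\<close>.\<close>

lemma infdist_le_hM_at_upper_boundary:
  assumes G: "is_MAC_grid \<Omega> G" and op: "open \<Omega>" and c: "c \<in> mesh \<Omega> G"
    and x: "x \<in> cellbox G c" and nm: "c(j := Suc (c j)) \<notin> mesh \<Omega> G"
  shows "infdist x (- \<Omega>) \<le> hM \<Omega> G"
proof -
  define a t where "a = gx G j (c j)" and "t = gx G j (Suc (c j))"
  have xj: "a < x$j" "x$j < t" using x unfolding cellbox_def a_def t_def by auto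
  have ok: "c j < gN G j" using c unfolding mesh_def cell_ok_def by auto
  obtain y where y: "y \<notin> \<Omega>" "\<And>l. l \<noteq> j \<Longrightarrow> y$l = x$l" "t < y$j" "y$j \<le> t + (x$j - a)"
  proof (cases "Suc (c j) < gN G j")
    case True
    define t2 where "t2 = gx G j (Suc (Suc (c j)))"
    have "t < t2" unfolding t_def t2_def
      using gx_strict_mono[OF G, of "Suc (c j)" "Suc (Suc (c j))" j] True by (simp add: Suc_leI)
    define r where "r = min (x$j - a) ((t2 - t) / 2)"
    have r: "0 < r" "r \<le> x$j - a" "t + r < t2"
      using xj \<open>t < t2\<close> unfolding r_def by (auto simp: min_def field_simps)
    define y where "y = (\<chi> l. if l = j then t + r else x$l)"
    have "cell_ok G (c(j := Suc (c j)))" using c True unfolding mesh_def cell_ok_def by auto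
    moreover have "y \<in> cellbox G (c(j := Suc (c j)))"
      using x r unfolding cellbox_def y_def t_def t2_def by auto
    ultimately have "y \<notin> \<Omega>" using cellbox_Int_Omega_empty[OF G op _ nm] by blast
    then show ?thesis using that[of y] r unfolding y_def by auto
  next
    case False
    define y where "y = (\<chi> l. if l = j then t + (x$j - a) else x$l)"
    from False have "Suc (c j) = gN G j" using ok by simp
    then have "y$j > gx G j (gN G j)" using xj unfolding y_def t_def by simp
    then have "y \<notin> \<Omega>" using not_in_Omega_beyond_grid[OF G] by blast
    then show ?thesis using that[of y] xj unfolding y_def by auto
  qed
  have "infdist x (- \<Omega>) \<le> dist x y" using y(1) by (intro infdist_le) simp
  also have "\<dots> \<le> \<bar>x$j - y$j\<bar>" using dist_le_abs_component[of j y x] y(2) by simp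
  also have "\<dots> \<le> hM \<Omega> G"
    using y(3,4) xj cell_width_le_hM[OF G c, of j] unfolding cell_width_def a_def t_def by simp
  finally show ?thesis .
qed

lemma infdist_le_hM_at_lower_boundary:
  assumes G: "is_MAC_grid \<Omega> G" and op: "open \<Omega>" and c: "c \<in> mesh \<Omega> G"
    and x: "x \<in> cellbox G c" and nm: "c j = 0 \<or> c(j := c j - 1) \<notin> mesh \<Omega> G"
  shows "infdist x (- \<Omega>) \<le> hM \<Omega> G"
proof -
  define a t where "a = gx G j (c j)" and "t = gx G j (Suc (c j))"
  have xj: "a < x$j" "x$j < t" using x unfolding cellbox_def a_def t_def by auto
  have ok: "c j < gN G j" using c unfolding mesh_def cell_ok_def by auto
  obtain y where y: "y \<notin> \<Omega>" "\<And>l. l \<noteq> j \<Longrightarrow> y$l = x$l" "y$j < a" "a - (t - x$j) \<le> y$j"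
  proof (cases "c j = 0")
    case False
    define t0 where "t0 = gx G j (c j - 1)"
    have "t0 < a" unfolding a_def t0_def
      using gx_strict_mono[OF G, of "c j - 1" "c j" j] False ok by simp
    define r where "r = min (t - x$j) ((a - t0) / 2)"
    have r: "0 < r" "r \<le> t - x$j" "t0 < a - r"
      using xj \<open>t0 < a\<close> unfolding r_def by (auto simp: min_def field_simps)
    define y where "y = (\<chi> l. if l = j then a - r else x$l)"
    have "cell_ok G (c(j := c j - 1))" using c False ok unfolding mesh_def cell_ok_def
      by (auto simp: less_imp_diff_less)
    moreover have "y \<in> cellbox G (c(j := c j - 1))"
      using x r False unfolding cellbox_def y_def a_def t0_def by auto
    ultimately have "y \<notin> \<Omega>" using cellbox_Int_Omega_empty[OF G op] nm False by blast
    then show ?thesis using that[of y] r unfolding y_def by auto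
  next
    case True
    define y where "y = (\<chi> l. if l = j then a - (t - x$j) else x$l)"
    have "y$j < gx G j 0" using xj True unfolding y_def a_def by simp
    then have "y \<notin> \<Omega>" using not_in_Omega_beyond_grid[OF G] by blast
    then show ?thesis using that[of y] xj unfolding y_def by auto
  qed
  have "infdist x (- \<Omega>) \<le> dist x y" using y(1) by (intro infdist_le) simp
  also have "\<dots> \<le> \<bar>x$j - y$j\<bar>" using dist_le_abs_component[of j y x] y(2) by simp
  also have "\<dots> \<le> hM \<Omega> G"
    using y(3,4) xj cell_width_le_hM[OF G c, of j] unfolding cell_width_def a_def t_def by simp
  finally show ?thesis .
qed

lemma subcell_face_in_int_faces_iff:
  assumes "c \<in> mesh \<Omega> G"
  shows "subcell_face c s j \<in> int_faces \<Omega> G j \<longleftrightarrow>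
     (if s j then c(j := Suc (c j)) \<in> mesh \<Omega> G else 0 < c j \<and> c(j := c j - 1) \<in> mesh \<Omega> G)"
proof -
  have "(c(j := Suc (c j)))(j := Suc (c j) - 1) = c" by (auto simp: fun_eq_iff)
  then show ?thesis
    using assms unfolding subcell_face_def int_faces_def has_low_def has_up_def by auto
qed

lemma infdist_le_hM_at_boundary_face:
  assumes G: "is_MAC_grid \<Omega> G" and op: "open \<Omega>" and c: "c \<in> mesh \<Omega> G"
    and nint: "subcell_face c s j \<notin> int_faces \<Omega> G j" and x: "x \<in> subcell G c s"
  shows "infdist x (- \<Omega>) \<le> hM \<Omega> G"
proof -
  have xc: "x \<in> cellbox G c" using subcell_subset_cellbox[OF G mesh_cell_ok[OF c]] x by blast
  show ?thesis
  proof (cases "s j")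
    case True
    then show ?thesis using nint subcell_face_in_int_faces_iff[OF c]
      by (intro infdist_le_hM_at_upper_boundary[OF G op c xc]) simp
  next
    case False
    then show ?thesis using nint subcell_face_in_int_faces_iff[OF c]
      by (intro infdist_le_hM_at_lower_boundary[OF G op c xc]) simp
  qed
qed

section \<open>Averaging inequalities\<close>

lemma convex_on_powr_nonneg:
  assumes q: "q \<ge> (1::real)"
  shows "convex_on {0..} (\<lambda>x::real. x powr q)"
proof (rule convex_onI)
  show "convex {0::real..}" by simp
  fix t x y :: real assume t: "0 < t" "t < 1" and xy: "x \<in> {0..}" "y \<in> {0..}"
  have scale: "(t * z) powr q \<le> t * z powr q" if "0 \<le> t" "t \<le> 1" "0 \<le> z" for t z :: real
  proof -
    have "(t * z) powr q = t powr q * z powr q" using that by (simp add: powr_mult)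
    also have "\<dots> \<le> t * z powr q"
      using that q powr_le_one_le[of t q] by (cases "t = 0") (auto intro: mult_right_mono)
    finally show ?thesis .
  qed
  show "((1 - t) *\<^sub>R x + t *\<^sub>R y) powr q \<le> (1 - t) * x powr q + t * y powr q"
  proof (cases "x = 0 \<or> y = 0")
    case True
    then show ?thesis using scale[of t y] scale[of "1 - t" x] t xy q by auto
  next
    case False
    then have "x \<in> {0<..}" "y \<in> {0<..}" using xy by auto
    then show ?thesis using convex_onD[OF powr_convex[OF q], of t x y] t by simp
  qed
qed

lemma abs_mean_powr_le:
  fixes z :: "'k \<Rightarrow> real"
  assumes K: "finite K" "K \<noteq> {}" and q: "q \<ge> 1"
  shows "\<bar>(\<Sum>k\<in>K. z k) / card K\<bar> powr q \<le> (\<Sum>k\<in>K. \<bar>z k\<bar> powr q) / card K"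
proof -
  have cK: "real (card K) > 0" using K by (simp add: card_gt_0_iff)
  have "\<bar>(\<Sum>k\<in>K. z k) / card K\<bar> \<le> (\<Sum>k\<in>K. (1 / card K) *\<^sub>R \<bar>z k\<bar>)"
    using cK by (simp add: sum_divide_distrib[symmetric]) (rule divide_right_mono[OF sum_abs], simp)
  then have "\<bar>(\<Sum>k\<in>K. z k) / card K\<bar> powr q \<le> (\<Sum>k\<in>K. (1 / card K) *\<^sub>R \<bar>z k\<bar>) powr q"
    using q by (intro powr_mono2) auto
  also have "\<dots> \<le> (\<Sum>k\<in>K. (1 / card K) * \<bar>z k\<bar> powr q)"
    by (rule convex_on_sum[OF K convex_on_powr_nonneg[OF q]]) (use cK in auto)
  also have "\<dots> = (\<Sum>k\<in>K. \<bar>z k\<bar> powr q) / card K"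
    by (simp add: sum_divide_distrib)
  finally show ?thesis .
qed

lemma ennreal_abs_mean_powr_le:
  fixes z :: "'k \<Rightarrow> real"
  assumes K: "finite K" "K \<noteq> {}" and q: "q \<ge> 1"
    and b: "\<And>k. k \<in> K \<Longrightarrow> ennreal (\<bar>z k\<bar> powr q) \<le> b k"
  shows "ennreal (\<bar>(\<Sum>k\<in>K. z k) / card K\<bar> powr q) \<le> (\<Sum>k\<in>K. ennreal (1 / card K) * b k)"
proof -
  have "ennreal (\<bar>(\<Sum>k\<in>K. z k) / card K\<bar> powr q) \<le>
      (\<Sum>k\<in>K. ennreal (1 / card K) * ennreal (\<bar>z k\<bar> powr q))"
    using abs_mean_powr_le[OF K q, of z]
    by (auto intro!: ennreal_leI simp: sum_divide_distrib sum_ennreal ennreal_mult[symmetric])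
  also have "\<dots> \<le> (\<Sum>k\<in>K. ennreal (1 / card K) * b k)"
    by (intro sum_mono mult_left_mono b) auto
  finally show ?thesis .
qed

lemma abs_add_powr_le:
  fixes a b q :: real
  assumes q: "q \<ge> 1"
  shows "\<bar>a + b\<bar> powr q \<le> 2 powr (q - 1) * (\<bar>a\<bar> powr q + \<bar>b\<bar> powr q)"
proof -
  have "\<bar>(a + b) / 2\<bar> powr q \<le> (\<bar>a\<bar> powr q + \<bar>b\<bar> powr q) / 2"
    using abs_mean_powr_le[of "{0::nat,1}" q "\<lambda>k. if k = 0 then a else b"] q by simp
  then have "2 powr q * \<bar>(a + b) / 2\<bar> powr q \<le> 2 powr q * ((\<bar>a\<bar> powr q + \<bar>b\<bar> powr q) / 2)"
    by (rule mult_left_mono) simp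
  then show ?thesis by (simp add: powr_mult[symmetric] powr_diff)
qed

lemma set_nn_integral_dist_powr_triangle:
  fixes f g h :: "'a \<Rightarrow> real"
  assumes "f \<in> borel_measurable M" "g \<in> borel_measurable M" "h \<in> borel_measurable M"
    and "\<Omega> \<in> sets M" and q: "q \<ge> 1"
  shows "(\<integral>\<^sup>+x\<in>\<Omega>. ennreal (\<bar>f x - h x\<bar> powr q) \<partial>M) \<le>
    ennreal (2 powr (q - 1)) * ((\<integral>\<^sup>+x\<in>\<Omega>. ennreal (\<bar>f x - g x\<bar> powr q) \<partial>M) +
                              (\<integral>\<^sup>+x\<in>\<Omega>. ennreal (\<bar>g x - h x\<bar> powr q) \<partial>M))"
proof -
  have "ennreal (\<bar>f x - h x\<bar> powr q) \<le>
      ennreal (2 powr (q - 1)) * (ennreal (\<bar>f x - g x\<bar> powr q) + ennreal (\<bar>g x - h x\<bar> powr q))"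
    for x
    using abs_add_powr_le[OF q, of "f x - g x" "g x - h x"]
    by (simp add: ennreal_mult[symmetric] ennreal_plus[symmetric] ennreal_leI del: ennreal_plus)
  then have "(\<integral>\<^sup>+x\<in>\<Omega>. ennreal (\<bar>f x - h x\<bar> powr q) \<partial>M) \<le>
     (\<integral>\<^sup>+x. ennreal (2 powr (q - 1)) * (ennreal (\<bar>f x - g x\<bar> powr q) * indicator \<Omega> x +
        ennreal (\<bar>g x - h x\<bar> powr q) * indicator \<Omega> x) \<partial>M)"
    by (intro nn_integral_mono) (simp add: indicator_def)
  also have "\<dots> = ennreal (2 powr (q - 1)) * ((\<integral>\<^sup>+x\<in>\<Omega>. ennreal (\<bar>f x - g x\<bar> powr q) \<partial>M) +
                              (\<integral>\<^sup>+x\<in>\<Omega>. ennreal (\<bar>g x - h x\<bar> powr q) \<partial>M))"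
    using assms by (simp add: nn_integral_cmult nn_integral_add)
  finally show ?thesis .
qed

text \<open>Average the triangle inequality through \<open>\<phi> y\<close> over \<open>y \<in> A\<close>.\<close>

lemma dist_powr_le_average:
  fixes \<phi> w :: "'a \<Rightarrow> real"
  assumes q: "q \<ge> 1" and A: "A \<in> sets M" "emeasure M A = ennreal \<alpha>" "\<alpha> > 0"
    and w: "\<And>y. y \<in> A \<Longrightarrow> w y = c" and close: "\<And>y. y \<in> A \<Longrightarrow> \<bar>\<phi> x - \<phi> y\<bar> \<le> \<epsilon>"
    and meas: "\<phi> \<in> borel_measurable M" "w \<in> borel_measurable M"
  shows "ennreal (\<bar>c - \<phi> x\<bar> powr q) \<le> ennreal (2 powr (q - 1)) *
     (ennreal (\<epsilon> powr q) + ennreal (1 / \<alpha>) * (\<integral>\<^sup>+y\<in>A. ennreal (\<bar>w y - \<phi> y\<bar> powr q) \<partial>M))"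
proof -
  define C where "C = ennreal (2 powr (q - 1))"
  define I where "I = (\<integral>\<^sup>+y\<in>A. ennreal (\<bar>w y - \<phi> y\<bar> powr q) \<partial>M)"
  have "ennreal (\<bar>c - \<phi> x\<bar> powr q) \<le> C * (ennreal (\<bar>w y - \<phi> y\<bar> powr q) + ennreal (\<epsilon> powr q))"
    if "y \<in> A" for y
  proof -
    have "\<bar>c - \<phi> x\<bar> powr q \<le> 2 powr (q - 1) * (\<bar>w y - \<phi> y\<bar> powr q + \<bar>\<phi> y - \<phi> x\<bar> powr q)"
      using abs_add_powr_le[OF q, of "w y - \<phi> y" "\<phi> y - \<phi> x"] w[OF that] by simp
    also have "\<dots> \<le> 2 powr (q - 1) * (\<bar>w y - \<phi> y\<bar> powr q + \<epsilon> powr q)"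
      using close[OF that] q by (intro mult_left_mono add_left_mono powr_mono2) auto
    finally have "ennreal (\<bar>c - \<phi> x\<bar> powr q) \<le>
        ennreal (2 powr (q - 1) * (\<bar>w y - \<phi> y\<bar> powr q + \<epsilon> powr q))"
      by (rule ennreal_leI)
    then show ?thesis unfolding C_def by (simp add: ennreal_mult)
  qed
  then have "(\<integral>\<^sup>+y\<in>A. ennreal (\<bar>c - \<phi> x\<bar> powr q) \<partial>M) \<le>
      (\<integral>\<^sup>+y\<in>A. C * (ennreal (\<bar>w y - \<phi> y\<bar> powr q) + ennreal (\<epsilon> powr q)) \<partial>M)"
    by (intro nn_integral_mono) (simp add: indicator_def)
  then have "ennreal (\<bar>c - \<phi> x\<bar> powr q) * ennreal \<alpha> \<le> C * (I + ennreal (\<epsilon> powr q) * ennreal \<alpha>)"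
    using A meas by (simp add: nn_integral_cmult_indicator nn_integral_cmult nn_integral_add
        distrib_right mult.assoc I_def)
  then have "ennreal (\<bar>c - \<phi> x\<bar> powr q) * ennreal \<alpha> * ennreal (1 / \<alpha>) \<le>
      C * (I + ennreal (\<epsilon> powr q) * ennreal \<alpha>) * ennreal (1 / \<alpha>)"
    by (rule mult_right_mono) simp
  moreover have "ennreal \<alpha> * ennreal (1 / \<alpha>) = 1" using A(3) by (simp flip: ennreal_mult)
  ultimately show ?thesis
    unfolding C_def I_def by (simp add: distrib_right mult.assoc mult.commute[of "ennreal (1 / \<alpha>)"]
        add.commute)
qed

lemma set_nn_integral_mean_estimate:
  fixes \<phi> w R :: "'a \<Rightarrow> real" and c \<alpha> :: "'k \<Rightarrow> real"
  assumes q: "q \<ge> 1" and \<epsilon>: "\<epsilon> \<ge> 0"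
    and p: "p \<in> sets M" "emeasure M p = ennreal P" "P \<ge> 0"
    and K: "finite K" "K \<noteq> {}"
    and A: "\<And>k. k \<in> K \<Longrightarrow> A k \<in> sets M" "\<And>k. k \<in> K \<Longrightarrow> emeasure M (A k) = ennreal (\<alpha> k)"
      "\<And>k. k \<in> K \<Longrightarrow> \<alpha> k > 0"
    and w: "\<And>k y. k \<in> K \<Longrightarrow> y \<in> A k \<Longrightarrow> w y = c k"
    and R: "\<And>x. x \<in> p \<Longrightarrow> R x = (\<Sum>k\<in>K. c k) / card K"
    and close: "\<And>k x y. k \<in> K \<Longrightarrow> x \<in> p \<Longrightarrow> y \<in> A k \<Longrightarrow> \<bar>\<phi> x - \<phi> y\<bar> \<le> \<epsilon>"
    and meas: "\<phi> \<in> borel_measurable M" "w \<in> borel_measurable M"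
  shows "(\<integral>\<^sup>+x\<in>p. ennreal (\<bar>R x - \<phi> x\<bar> powr q) \<partial>M) \<le>
    ennreal (2 powr (q - 1)) * (ennreal P * ennreal (\<epsilon> powr q) +
      (\<Sum>k\<in>K. ennreal (P / (card K * \<alpha> k)) * (\<integral>\<^sup>+y\<in>A k. ennreal (\<bar>w y - \<phi> y\<bar> powr q) \<partial>M)))"
proof -
  define C where "C = ennreal (2 powr (q - 1))"
  define I where "I k = (\<integral>\<^sup>+y\<in>A k. ennreal (\<bar>w y - \<phi> y\<bar> powr q) \<partial>M)" for k
  define B where "B = C * (ennreal (\<epsilon> powr q) + (\<Sum>k\<in>K. ennreal (1 / (card K * \<alpha> k)) * I k))"
  have cK: "real (card K) > 0" using K by (simp add: card_gt_0_iff)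
  have one: "(\<Sum>k\<in>K. ennreal (1 / card K)) = 1"
    using cK by (simp add: ennreal_of_nat_eq_real_of_nat flip: ennreal_mult)
  have pointwise: "ennreal (\<bar>R x - \<phi> x\<bar> powr q) \<le> B" if x: "x \<in> p" for x
  proof -
    have "R x - \<phi> x = (\<Sum>k\<in>K. c k - \<phi> x) / card K"
      using R[OF x] cK by (simp add: sum_subtractf diff_divide_distrib)
    then have "ennreal (\<bar>R x - \<phi> x\<bar> powr q) = ennreal (\<bar>(\<Sum>k\<in>K. c k - \<phi> x) / card K\<bar> powr q)"
      by simp
    also have "\<dots> \<le> (\<Sum>k\<in>K. ennreal (1 / card K) *
        (C * (ennreal (\<epsilon> powr q) + ennreal (1 / \<alpha> k) * I k)))"
      unfolding C_def I_def
      by (intro ennreal_abs_mean_powr_le[OF K q] dist_powr_le_average[OF q A(1-3) w _ meas])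
         (auto intro: close[OF _ x])
    also have "\<dots> = C * ((\<Sum>k\<in>K. ennreal (1 / card K)) * ennreal (\<epsilon> powr q) +
        (\<Sum>k\<in>K. ennreal (1 / card K) * ennreal (1 / \<alpha> k) * I k))"
      by (simp add: sum_distrib_left sum_distrib_right distrib_left sum.distrib mult_ac)
    also have "\<dots> = B"
    proof -
      have "ennreal (1 / card K) * ennreal (1 / \<alpha> k) = ennreal (1 / (card K * \<alpha> k))"
        if "k \<in> K" for k
        using A(3)[OF that] cK by (simp flip: ennreal_mult)
      then show ?thesis unfolding B_def one by (simp cong: sum.cong)
    qed
    finally show ?thesis .
  qed
  have "(\<integral>\<^sup>+x\<in>p. ennreal (\<bar>R x - \<phi> x\<bar> powr q) \<partial>M) \<le> (\<integral>\<^sup>+x\<in>p. B \<partial>M)"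
    by (intro nn_integral_mono) (simp add: indicator_def pointwise)
  also have "\<dots> = B * ennreal P" using p by (simp add: nn_integral_cmult_indicator)
  also have "\<dots> = C * (ennreal P * ennreal (\<epsilon> powr q) +
      (\<Sum>k\<in>K. ennreal (1 / (card K * \<alpha> k)) * ennreal P * I k))"
    unfolding B_def by (simp add: distrib_left sum_distrib_left mult_ac)
  also have "\<dots> = C * (ennreal P * ennreal (\<epsilon> powr q) +
      (\<Sum>k\<in>K. ennreal (P / (card K * \<alpha> k)) * I k))"
  proof -
    have "ennreal (1 / (card K * \<alpha> k)) * ennreal P = ennreal (P / (card K * \<alpha> k))"
      if "k \<in> K" for k
      using A(3)[OF that] p(3) cK by (simp flip: ennreal_mult)
    then show ?thesis by (simp cong: sum.cong)
  qed
  finally show ?thesis unfolding C_def I_def .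
qed

section \<open>Local estimates for \<open>R_M\<close> and \<open>R_EE\<close>\<close>

lemma sum_subcells_estimate:
  fixes F I :: "(3 \<Rightarrow> nat) \<times> (3 \<Rightarrow> bool) \<Rightarrow> ennreal" and J :: "'k \<Rightarrow> _ \<Rightarrow> ennreal"
  assumes G: "is_MAC_grid \<Omega> G" and Om: "\<Omega> \<in> sets lebesgue" and K: "finite K"
    and est: "\<And>p. p \<in> subcells \<Omega> G \<Longrightarrow>
      F p \<le> C * (emeasure lebesgue (subcell G (fst p) (snd p)) * E + (\<Sum>k\<in>K. D * J k p))"
    and reindex: "\<And>k. k \<in> K \<Longrightarrow> (\<Sum>p\<in>subcells \<Omega> G. J k p) \<le> (\<Sum>p\<in>subcells \<Omega> G. I p)"
  shows "(\<Sum>p\<in>subcells \<Omega> G. F p) \<le>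
    C * (emeasure lebesgue \<Omega> * E + of_nat (card K) * D * (\<Sum>p\<in>subcells \<Omega> G. I p))"
proof -
  let ?\<mu> = "\<lambda>p. emeasure lebesgue (subcell G (fst p) (snd p))"
  have "(\<Sum>p\<in>subcells \<Omega> G. F p) \<le> (\<Sum>p\<in>subcells \<Omega> G. C * (?\<mu> p * E + (\<Sum>k\<in>K. D * J k p)))"
    by (rule sum_mono) (rule est)
  also have "\<dots> = C * ((\<Sum>p\<in>subcells \<Omega> G. ?\<mu> p) * E + (\<Sum>k\<in>K. D * (\<Sum>p\<in>subcells \<Omega> G. J k p)))"
    by (simp add: sum.distrib sum_distrib_right flip: sum_distrib_left)
       (simp add: sum_distrib_left sum.swap[of _ "subcells \<Omega> G"])
  also have "\<dots> \<le> C * ((\<Sum>p\<in>subcells \<Omega> G. ?\<mu> p) * E + (\<Sum>k\<in>K. D * (\<Sum>p\<in>subcells \<Omega> G. I p)))"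
    by (intro mult_left_mono add_left_mono sum_mono reindex) auto
  finally show ?thesis using sum_emeasure_subcells[OF G Om] by (simp add: mult.assoc)
qed

lemma sum_reindex_inj_le:
  fixes f :: "'b \<Rightarrow> ennreal"
  assumes "finite B" "inj_on T A" "T ` A \<subseteq> B"
  shows "(\<Sum>a\<in>A. f (T a)) \<le> (\<Sum>b\<in>B. f b)"
proof -
  have "(\<Sum>a\<in>A. f (T a)) = (\<Sum>b\<in>T ` A. f b)" using sum.reindex[OF assms(2), of f] by simp
  also have "\<dots> \<le> (\<Sum>b\<in>B. f b)" by (rule sum_mono2[OF assms(1,3)]) simp
  finally show ?thesis .
qed

definition flip_if :: "3 \<Rightarrow> bool \<Rightarrow> (3 \<Rightarrow> bool) \<Rightarrow> (3 \<Rightarrow> bool)" where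
  "flip_if i b s = (if b then s(i := \<not> s i) else s)"

lemma flip_if_inj: "flip_if i b s = flip_if i b s' \<Longrightarrow> s = s'"
  unfolding flip_if_def by (cases b) (auto simp: fun_eq_iff split: if_splits)

lemma sum_subcell_face_flip_if:
  "(\<Sum>b\<in>UNIV. u (subcell_face c (flip_if i b s) i)) = u c + u (c(i := Suc (c i)))"
  by (cases "s i") (auto simp: UNIV_bool flip_if_def subcell_face_def add.commute)

lemma R_M_subcell_estimate:
  fixes \<phi> :: "real^3 \<Rightarrow> real"
  assumes G: "is_MAC_grid \<Omega> G" and c: "c \<in> mesh \<Omega> G" and q: "q \<ge> 1" and \<epsilon>: "\<epsilon> \<ge> 0"
    and mphi: "\<phi> \<in> borel_measurable lebesgue"
    and close: "\<And>x y. x \<in> \<Omega> \<Longrightarrow> y \<in> \<Omega> \<Longrightarrow> dist x y \<le> 4 * hM \<Omega> G \<Longrightarrow> \<bar>\<phi> x - \<phi> y\<bar> \<le> \<epsilon>"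
  shows "(\<integral>\<^sup>+x\<in>subcell G c s. ennreal (\<bar>R_M \<Omega> G i u x - \<phi> x\<bar> powr q) \<partial>lebesgue) \<le>
    ennreal (2 powr (q - 1)) * (emeasure lebesgue (subcell G c s) * ennreal (\<epsilon> powr q) +
      (\<Sum>b\<in>UNIV. ennreal (1 / 2) * (\<integral>\<^sup>+y\<in>subcell G c (flip_if i b s).
         ennreal (\<bar>disc_fun \<Omega> G i u y - \<phi> y\<bar> powr q) \<partial>lebesgue)))"
proof -
  define P where "P = cell_volume G c / 8"
  have P: "P > 0" "emeasure lebesgue (subcell G c s') = ennreal P" for s'
    using cell_volume_pos[OF G] emeasure_subcell[OF G] mesh_cell_ok[OF c] unfolding P_def by auto
  have "(\<integral>\<^sup>+x\<in>subcell G c s. ennreal (\<bar>R_M \<Omega> G i u x - \<phi> x\<bar> powr q) \<partial>lebesgue) \<le>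
    ennreal (2 powr (q - 1)) * (ennreal P * ennreal (\<epsilon> powr q) +
      (\<Sum>b\<in>UNIV. ennreal (P / (card (UNIV :: bool set) * P)) *
        (\<integral>\<^sup>+y\<in>subcell G c (flip_if i b s). ennreal (\<bar>disc_fun \<Omega> G i u y - \<phi> y\<bar> powr q) \<partial>lebesgue)))"
  proof (rule set_nn_integral_mean_estimate[OF q \<epsilon> _ P(2) less_imp_le[OF P(1)]])
    fix b y assume "y \<in> subcell G c (flip_if i b s)"
    then show "disc_fun \<Omega> G i u y = u (subcell_face c (flip_if i b s) i)"
      by (rule disc_fun_on_subcell[OF G c])
  next
    fix x assume "x \<in> subcell G c s"
    then show "R_M \<Omega> G i u x =
        (\<Sum>b\<in>UNIV. u (subcell_face c (flip_if i b s) i)) / card (UNIV :: bool set)"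
      using R_M_on_subcell[OF G c] sum_subcell_face_flip_if[of u c i s] by simp
  next
    fix b x y assume x: "x \<in> subcell G c s" and y: "y \<in> subcell G c (flip_if i b s)"
    have "dist x y \<le> 4 * hM \<Omega> G"
      using x y subcell_subset_cellcbox[OF G c]
      by (intro dist_adjacent_cells_le[OF G c c, of x y 0]) auto
    then show "\<bar>\<phi> x - \<phi> y\<bar> \<le> \<epsilon>" using close x y subcell_subset_Omega[OF G c] by blast
  qed (use P mphi borel_measurable_disc_fun in \<open>auto simp: subcell_def\<close>)
  then show ?thesis using P by simp
qed

lemma R_M_local_estimate:
  fixes \<phi> :: "real^3 \<Rightarrow> real"
  assumes G: "is_MAC_grid \<Omega> G" and Om: "\<Omega> \<in> sets lebesgue" and q: "q \<ge> 1" and \<epsilon>: "\<epsilon> \<ge> 0"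
    and mphi: "\<phi> \<in> borel_measurable lebesgue"
    and close: "\<And>x y. x \<in> \<Omega> \<Longrightarrow> y \<in> \<Omega> \<Longrightarrow> dist x y \<le> 4 * hM \<Omega> G \<Longrightarrow> \<bar>\<phi> x - \<phi> y\<bar> \<le> \<epsilon>"
  shows "(\<integral>\<^sup>+x\<in>\<Omega>. ennreal (\<bar>R_M \<Omega> G i u x - \<phi> x\<bar> powr q) \<partial>lebesgue) \<le>
     ennreal (2 powr (q - 1)) * (emeasure lebesgue \<Omega> * ennreal (\<epsilon> powr q) +
        (\<integral>\<^sup>+x\<in>\<Omega>. ennreal (\<bar>disc_fun \<Omega> G i u x - \<phi> x\<bar> powr q) \<partial>lebesgue))"
proof -
  define I where "I p = (\<integral>\<^sup>+y\<in>subcell G (fst p) (snd p).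
    ennreal (\<bar>disc_fun \<Omega> G i u y - \<phi> y\<bar> powr q) \<partial>lebesgue)" for p
  have "(\<integral>\<^sup>+x\<in>\<Omega>. ennreal (\<bar>R_M \<Omega> G i u x - \<phi> x\<bar> powr q) \<partial>lebesgue) =
      (\<Sum>p\<in>subcells \<Omega> G. \<integral>\<^sup>+x\<in>subcell G (fst p) (snd p).
        ennreal (\<bar>R_M \<Omega> G i u x - \<phi> x\<bar> powr q) \<partial>lebesgue)"
    by (rule set_nn_integral_eq_sum_subcells[OF G]) (use mphi borel_measurable_R_M in measurable)
  also have "\<dots> \<le> ennreal (2 powr (q - 1)) * (emeasure lebesgue \<Omega> * ennreal (\<epsilon> powr q) +
      of_nat (card (UNIV :: bool set)) * ennreal (1 / 2) * (\<Sum>p\<in>subcells \<Omega> G. I p))"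
  proof (rule sum_subcells_estimate[OF G Om finite_class.finite_UNIV, where J = "\<lambda>b p. I (fst p, flip_if i b (snd p))"])
    fix p assume "p \<in> subcells \<Omega> G"
    then obtain c s where p: "p = (c, s)" and c: "c \<in> mesh \<Omega> G" by (auto simp: subcells_def)
    show "(\<integral>\<^sup>+x\<in>subcell G (fst p) (snd p). ennreal (\<bar>R_M \<Omega> G i u x - \<phi> x\<bar> powr q) \<partial>lebesgue)
      \<le> ennreal (2 powr (q - 1)) * (emeasure lebesgue (subcell G (fst p) (snd p)) *
        ennreal (\<epsilon> powr q) + (\<Sum>b\<in>UNIV. ennreal (1 / 2) * I (fst p, flip_if i b (snd p))))"
      unfolding I_def p using R_M_subcell_estimate[OF G c q \<epsilon> mphi close, where s = s] by simp
  next
    fix b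
    show "(\<Sum>p\<in>subcells \<Omega> G. I (fst p, flip_if i b (snd p))) \<le> (\<Sum>p\<in>subcells \<Omega> G. I p)"
      by (rule sum_reindex_inj_le[OF finite_subcells, of "\<lambda>p. (fst p, flip_if i b (snd p))"])
         (auto intro!: inj_onI simp: subcells_def prod_eq_iff dest: flip_if_inj)
  qed
  also have "(\<Sum>p\<in>subcells \<Omega> G. I p) = (\<integral>\<^sup>+x\<in>\<Omega>. ennreal (\<bar>disc_fun \<Omega> G i u x - \<phi> x\<bar> powr q) \<partial>lebesgue)"
    unfolding I_def
    by (rule set_nn_integral_eq_sum_subcells[OF G, symmetric])
       (use mphi borel_measurable_disc_fun in measurable)
  also have "of_nat (card (UNIV :: bool set)) * ennreal (1 / 2) = 1"
  proof -
    have "ennreal 2 * ennreal (1 / 2) = 1" by (subst ennreal_mult[symmetric]) auto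
    then show ?thesis by simp
  qed
  finally show ?thesis by simp
qed

definition neighbour_cell :: "3 \<Rightarrow> (3 \<Rightarrow> nat) \<Rightarrow> (3 \<Rightarrow> bool) \<Rightarrow> (3 \<Rightarrow> nat)" where
  "neighbour_cell j c s = (if s j then c(j := Suc (c j)) else c(j := c j - 1))"

definition stencil_cell :: "bool \<Rightarrow> 3 \<Rightarrow> (3 \<Rightarrow> nat) \<Rightarrow> (3 \<Rightarrow> bool) \<Rightarrow> (3 \<Rightarrow> nat)" where
  "stencil_cell a j c s = (if a then neighbour_cell j c s else c)"

definition interior_subcells :: "(real^3) set \<Rightarrow> grid \<Rightarrow> 3 \<Rightarrow> ((3 \<Rightarrow> nat) \<times> (3 \<Rightarrow> bool)) set" where
  "interior_subcells \<Omega> G j = {p \<in> subcells \<Omega> G. subcell_face (fst p) (snd p) j \<in> int_faces \<Omega> G j}"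

text \<open>On the subcell \<open>p\<close>, \<open>R_EE \<Omega> G i j u\<close> is the mean of the values of \<open>disc_fun \<Omega> G i u\<close>
  on the four subcells \<open>stencil_subcell i j k p\<close>: \<open>fst k\<close> chooses between the cell of \<open>p\<close> and
  its neighbour across the face orthogonal to \<open>e_j\<close>, \<open>snd k\<close> between the two halves in
  direction \<open>i\<close>.\<close>

definition stencil_subcell ::
    "3 \<Rightarrow> 3 \<Rightarrow> bool \<times> bool \<Rightarrow> (3 \<Rightarrow> nat) \<times> (3 \<Rightarrow> bool) \<Rightarrow> (3 \<Rightarrow> nat) \<times> (3 \<Rightarrow> bool)" where
  "stencil_subcell i j k p = (stencil_cell (fst k) j (fst p) (snd p), flip_if i (snd k) (snd p))"

lemma neighbour_cell_other: "k \<noteq> j \<Longrightarrow> neighbour_cell j c s k = c k"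
  unfolding neighbour_cell_def by auto

lemma neighbour_cell_inj:
  assumes "neighbour_cell j c s = neighbour_cell j c' s" "s j \<or> 0 < c j" "s j \<or> 0 < c' j"
  shows "c = c'"
proof (rule ext)
  fix k
  have "neighbour_cell j c s k = neighbour_cell j c' s k" using assms(1) by simp
  then show "c k = c' k" using assms(2,3) unfolding neighbour_cell_def by (cases "k = j"; cases "s j") auto
qed

lemma interior_subcellsD:
  assumes "(c, s) \<in> interior_subcells \<Omega> G j"
  shows "c \<in> mesh \<Omega> G" "neighbour_cell j c s \<in> mesh \<Omega> G" "s j \<or> 0 < c j"
proof -
  show c: "c \<in> mesh \<Omega> G" using assms unfolding interior_subcells_def subcells_def by auto
  have "subcell_face c s j \<in> int_faces \<Omega> G j" using assms unfolding interior_subcells_def by auto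
  then show "neighbour_cell j c s \<in> mesh \<Omega> G" "s j \<or> 0 < c j"
    using subcell_face_in_int_faces_iff[OF c] unfolding neighbour_cell_def by (auto split: if_splits)
qed

lemma stencil_cell_in_mesh: "(c, s) \<in> interior_subcells \<Omega> G j \<Longrightarrow> stencil_cell a j c s \<in> mesh \<Omega> G"
  using interior_subcellsD unfolding stencil_cell_def by auto

lemma inj_on_stencil_subcell: "inj_on (stencil_subcell i j k) (interior_subcells \<Omega> G j)"
proof (rule inj_onI)
  fix p p' assume p: "p \<in> interior_subcells \<Omega> G j" and p': "p' \<in> interior_subcells \<Omega> G j"
    and eq: "stencil_subcell i j k p = stencil_subcell i j k p'"
  obtain c s c' s' where ps: "p = (c, s)" "p' = (c', s')" by (cases p, cases p')
  have "s = s'" using eq ps unfolding stencil_subcell_def by (auto dest: flip_if_inj)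
  moreover have "c = c'"
  proof (cases "fst k")
    case False
    then show ?thesis using eq ps unfolding stencil_subcell_def stencil_cell_def by simp
  next
    case True
    then have "neighbour_cell j c s = neighbour_cell j c' s"
      using eq ps \<open>s = s'\<close> unfolding stencil_subcell_def stencil_cell_def by simp
    moreover have "s j \<or> 0 < c j" "s j \<or> 0 < c' j"
      using interior_subcellsD(3) p p' ps \<open>s = s'\<close> by auto
    ultimately show ?thesis by (rule neighbour_cell_inj)
  qed
  ultimately show "p = p'" using ps by simp
qed

lemma stencil_subcell_in_subcells:
  "stencil_subcell i j k ` interior_subcells \<Omega> G j \<subseteq> subcells \<Omega> G"
  using stencil_cell_in_mesh unfolding stencil_subcell_def subcells_def by fastforce

lemma R_EE_val_subcell_face:
  assumes "i \<noteq> j"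
  shows "R_EE_val i j u (subcell_face c s j) = ((u c + u (c(i := Suc (c i)))) +
     (u (neighbour_cell j c s) + u ((neighbour_cell j c s)(i := Suc (neighbour_cell j c s i))))) / 4"
proof (cases "s j")
  case True
  have "(c(j := Suc (c j)))(j := Suc (c j) - 1) = c" by (auto simp: fun_eq_iff)
  then have "R_EE_val i j u (subcell_face c s j) = (u c + u (c(i := Suc (c i))) +
      u (c(j := Suc (c j))) + u ((c(j := Suc (c j)))(i := Suc ((c(j := Suc (c j))) i)))) / 4"
    using True assms unfolding R_EE_val_def subcell_face_def Let_def by simp
  then show ?thesis using True unfolding neighbour_cell_def by (simp add: add.assoc)
next
  case False
  have "R_EE_val i j u (subcell_face c s j) = (u (c(j := c j - 1)) +
      u ((c(j := c j - 1))(i := Suc ((c(j := c j - 1)) i))) + u c + u (c(i := Suc (c i)))) / 4"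
    using False assms unfolding R_EE_val_def subcell_face_def Let_def by simp
  then show ?thesis using False unfolding neighbour_cell_def by (simp add: algebra_simps)
qed

lemma sum_stencil_subcells_le:
  fixes I :: "(3 \<Rightarrow> nat) \<times> (3 \<Rightarrow> bool) \<Rightarrow> ennreal"
  shows "(\<Sum>p\<in>subcells \<Omega> G. if p \<in> interior_subcells \<Omega> G j then I (stencil_subcell i j k p) else 0)
    \<le> (\<Sum>p\<in>subcells \<Omega> G. I p)"
proof -
  have "(\<Sum>p\<in>subcells \<Omega> G. if p \<in> interior_subcells \<Omega> G j then I (stencil_subcell i j k p) else 0)
      = (\<Sum>p\<in>interior_subcells \<Omega> G j. I (stencil_subcell i j k p))"
    using finite_subcells by (simp add: sum.If_cases interior_subcells_def Int_absorb1 Int_def)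
  also have "\<dots> \<le> (\<Sum>p\<in>subcells \<Omega> G. I p)"
    by (rule sum_reindex_inj_le[OF finite_subcells inj_on_stencil_subcell stencil_subcell_in_subcells])
  finally show ?thesis .
qed

lemma mean_stencil_eq_R_EE_val:
  assumes "i \<noteq> j"
  shows "(\<Sum>k\<in>UNIV. u (subcell_face (stencil_cell (fst k) j c s) (flip_if i (snd k) s) i)) /
      card (UNIV :: (bool \<times> bool) set) = R_EE_val i j u (subcell_face c s j)"
proof -
  have "(\<Sum>k\<in>UNIV. u (subcell_face (stencil_cell (fst k) j c s) (flip_if i (snd k) s) i)) =
      (\<Sum>a\<in>UNIV. \<Sum>b\<in>UNIV. u (subcell_face (stencil_cell a j c s) (flip_if i b s) i))"
    by (simp add: UNIV_Times_UNIV[symmetric] sum.cartesian_product case_prod_beta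
        del: UNIV_Times_UNIV)
  also have "\<dots> = (\<Sum>a\<in>UNIV. u (stencil_cell a j c s) +
      u ((stencil_cell a j c s)(i := Suc (stencil_cell a j c s i))))"
    by (simp only: sum_subcell_face_flip_if)
  also have "\<dots> = (u c + u (c(i := Suc (c i)))) +
      (u (neighbour_cell j c s) + u ((neighbour_cell j c s)(i := Suc (neighbour_cell j c s i))))"
    by (simp add: UNIV_bool stencil_cell_def add.commute)
  moreover have "card (UNIV :: (bool \<times> bool) set) = 4" by (simp add: card_UNIV_bool)
  ultimately show ?thesis using R_EE_val_subcell_face[OF assms, of u c s] by simp
qed

lemma stencil_volume_ratio_le:
  assumes G: "is_MAC_grid \<Omega> G" and ne: "\<Omega> \<noteq> {}" and eta: "\<eta> > 0" "etaM \<Omega> G \<ge> \<eta>"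
    and p: "(c, s) \<in> interior_subcells \<Omega> G j"
  shows "cell_volume G c / (4 * cell_volume G (stencil_cell a j c s)) \<le> (1 + 1 / \<eta>) / 4"
proof -
  have c: "c \<in> mesh \<Omega> G" and n: "neighbour_cell j c s \<in> mesh \<Omega> G"
    using interior_subcellsD[OF p] by auto
  have pos: "cell_volume G c > 0" "cell_volume G (neighbour_cell j c s) > 0"
    using cell_volume_pos[OF G] mesh_cell_ok c n by auto
  have "\<eta> * cell_volume G c \<le> cell_volume G (neighbour_cell j c s)"
    by (rule eta_cell_volume_le_neighbour[OF G ne eta(2) c n neighbour_cell_other])
  then have "cell_volume G c / cell_volume G (neighbour_cell j c s) \<le> 1 / \<eta>"
    using pos eta(1) by (simp add: field_simps)
  then have "cell_volume G c / (4 * cell_volume G (neighbour_cell j c s)) \<le> 1 / \<eta> / 4" by simp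
  also have "\<dots> \<le> (1 + 1 / \<eta>) / 4" using eta(1) by simp
  finally show ?thesis using pos(1) eta(1) unfolding stencil_cell_def by (cases a) simp_all
qed

lemma R_EE_boundary_subcell_integral_eq_0:
  assumes G: "is_MAC_grid \<Omega> G" and op: "open \<Omega>" and c: "c \<in> mesh \<Omega> G"
    and nint: "subcell_face c s j \<notin> int_faces \<Omega> G j"
    and vanish: "\<And>x. infdist x (- \<Omega>) \<le> hM \<Omega> G \<Longrightarrow> \<phi> x = 0" and q: "q \<ge> 1"
  shows "(\<integral>\<^sup>+x\<in>subcell G c s. ennreal (\<bar>R_EE \<Omega> G i j u x - \<phi> x\<bar> powr q) \<partial>lebesgue) = 0"
proof -
  have "R_EE \<Omega> G i j u x = 0" "\<phi> x = 0" if "x \<in> subcell G c s" for x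
    using R_EE_on_subcell[OF G c that] nint
      vanish[OF infdist_le_hM_at_boundary_face[OF G op c nint that]] by auto
  then have z: "ennreal (\<bar>R_EE \<Omega> G i j u x - \<phi> x\<bar> powr q) * indicator (subcell G c s) x = 0"
    for x
    using q by (cases "x \<in> subcell G c s") auto
  show ?thesis by (simp only: z) simp
qed

lemma R_EE_subcell_estimate:
  fixes \<phi> :: "real^3 \<Rightarrow> real"
  assumes G: "is_MAC_grid \<Omega> G" and ne: "\<Omega> \<noteq> {}" and eta: "\<eta> > 0" "etaM \<Omega> G \<ge> \<eta>"
    and ij: "i \<noteq> j" and p: "(c, s) \<in> interior_subcells \<Omega> G j"
    and q: "q \<ge> 1" and \<epsilon>: "\<epsilon> \<ge> 0" and mphi: "\<phi> \<in> borel_measurable lebesgue"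
    and close: "\<And>x y. x \<in> \<Omega> \<Longrightarrow> y \<in> \<Omega> \<Longrightarrow> dist x y \<le> 4 * hM \<Omega> G \<Longrightarrow> \<bar>\<phi> x - \<phi> y\<bar> \<le> \<epsilon>"
  shows "(\<integral>\<^sup>+x\<in>subcell G c s. ennreal (\<bar>R_EE \<Omega> G i j u x - \<phi> x\<bar> powr q) \<partial>lebesgue) \<le>
    ennreal (2 powr (q - 1)) * (emeasure lebesgue (subcell G c s) * ennreal (\<epsilon> powr q) +
      (\<Sum>k\<in>UNIV. ennreal ((1 + 1 / \<eta>) / 4) *
        (\<integral>\<^sup>+y\<in>subcell G (fst (stencil_subcell i j k (c, s))) (snd (stencil_subcell i j k (c, s))).
          ennreal (\<bar>disc_fun \<Omega> G i u y - \<phi> y\<bar> powr q) \<partial>lebesgue)))"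
proof -
  let ?c = "\<lambda>k :: bool \<times> bool. stencil_cell (fst k) j c s" and ?s = "\<lambda>k :: bool \<times> bool. flip_if i (snd k) s"
  let ?I = "\<lambda>k. \<integral>\<^sup>+y\<in>subcell G (?c k) (?s k). ennreal (\<bar>disc_fun \<Omega> G i u y - \<phi> y\<bar> powr q) \<partial>lebesgue"
  have c: "c \<in> mesh \<Omega> G" and ck: "\<And>k. ?c k \<in> mesh \<Omega> G"
    using interior_subcellsD(1)[OF p] stencil_cell_in_mesh[OF p] by auto
  define P where "P = cell_volume G c / 8"
  define \<alpha> where "\<alpha> k = cell_volume G (?c k) / 8" for k :: "bool \<times> bool"
  have P: "P > 0" "emeasure lebesgue (subcell G c s) = ennreal P"
    using cell_volume_pos[OF G] emeasure_subcell[OF G] mesh_cell_ok[OF c] unfolding P_def by auto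
  have \<alpha>: "\<alpha> k > 0" "emeasure lebesgue (subcell G (?c k) s') = ennreal (\<alpha> k)" for k s'
    using cell_volume_pos[OF G] emeasure_subcell[OF G] mesh_cell_ok[OF ck] unfolding \<alpha>_def by auto
  have "(\<integral>\<^sup>+x\<in>subcell G c s. ennreal (\<bar>R_EE \<Omega> G i j u x - \<phi> x\<bar> powr q) \<partial>lebesgue) \<le>
    ennreal (2 powr (q - 1)) * (ennreal P * ennreal (\<epsilon> powr q) +
      (\<Sum>k\<in>UNIV. ennreal (P / (real (card (UNIV :: (bool \<times> bool) set)) * \<alpha> k)) * ?I k))"
  proof (rule set_nn_integral_mean_estimate[OF q \<epsilon> _ P(2) less_imp_le[OF P(1)]])
    fix k y assume "y \<in> subcell G (?c k) (?s k)"
    then show "disc_fun \<Omega> G i u y = u (subcell_face (?c k) (?s k) i)"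
      by (rule disc_fun_on_subcell[OF G ck])
  next
    fix x assume "x \<in> subcell G c s"
    then show "R_EE \<Omega> G i j u x =
        (\<Sum>k\<in>UNIV. u (subcell_face (?c k) (?s k) i)) / card (UNIV :: (bool \<times> bool) set)"
      using R_EE_on_subcell[OF G c] p mean_stencil_eq_R_EE_val[OF ij]
      unfolding interior_subcells_def by simp
  next
    fix k x y assume x: "x \<in> subcell G c s" and y: "y \<in> subcell G (?c k) (?s k)"
    have xy: "x \<in> cellcbox G c" "y \<in> cellcbox G (?c k)"
      using subcell_subset_cellcbox[OF G c] subcell_subset_cellcbox[OF G ck[of k]] x y by blast+
    have "?c k j = c j \<or> ?c k j = Suc (c j) \<or> Suc (?c k j) = c j"
      using interior_subcellsD(3)[OF p] unfolding stencil_cell_def neighbour_cell_def by auto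
    then have "dist x y \<le> 4 * hM \<Omega> G"
      by (intro dist_adjacent_cells_le[OF G c ck[of k] xy]) (auto simp: stencil_cell_def neighbour_cell_other)
    then show "\<bar>\<phi> x - \<phi> y\<bar> \<le> \<epsilon>"
      using close x y subcell_subset_Omega[OF G c] subcell_subset_Omega[OF G ck] by blast
  qed (use \<alpha> mphi borel_measurable_disc_fun in \<open>auto simp: subcell_def\<close>)
  also have "\<dots> \<le> ennreal (2 powr (q - 1)) * (ennreal P * ennreal (\<epsilon> powr q) +
      (\<Sum>k\<in>UNIV. ennreal ((1 + 1 / \<eta>) / 4) * ?I k))"
  proof (intro mult_left_mono add_left_mono sum_mono mult_right_mono ennreal_leI)
    fix k :: "bool \<times> bool"
    have "P / (real (card (UNIV :: (bool \<times> bool) set)) * \<alpha> k) = cell_volume G c / (4 * cell_volume G (?c k))"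
      unfolding P_def \<alpha>_def by (simp add: card_UNIV_bool)
    also have "\<dots> \<le> (1 + 1 / \<eta>) / 4" by (rule stencil_volume_ratio_le[OF G ne eta p])
    finally show "P / (real (card (UNIV :: (bool \<times> bool) set)) * \<alpha> k) \<le> (1 + 1 / \<eta>) / 4" .
  qed auto
  finally show ?thesis using P(2) by (simp add: stencil_subcell_def)
qed

lemma R_EE_local_estimate:
  fixes \<phi> :: "real^3 \<Rightarrow> real"
  assumes G: "is_MAC_grid \<Omega> G" and op: "open \<Omega>" and ne: "\<Omega> \<noteq> {}"
    and eta: "\<eta> > 0" "etaM \<Omega> G \<ge> \<eta>" and ij: "i \<noteq> j" and q: "q \<ge> 1"
    and mphi: "\<phi> \<in> borel_measurable lebesgue" and \<epsilon>: "\<epsilon> \<ge> 0"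
    and close: "\<And>x y. x \<in> \<Omega> \<Longrightarrow> y \<in> \<Omega> \<Longrightarrow> dist x y \<le> 4 * hM \<Omega> G \<Longrightarrow> \<bar>\<phi> x - \<phi> y\<bar> \<le> \<epsilon>"
    and vanish: "\<And>x. infdist x (- \<Omega>) \<le> hM \<Omega> G \<Longrightarrow> \<phi> x = 0"
  shows "(\<integral>\<^sup>+x\<in>\<Omega>. ennreal (\<bar>R_EE \<Omega> G i j u x - \<phi> x\<bar> powr q) \<partial>lebesgue) \<le>
     ennreal (2 powr (q - 1)) * (emeasure lebesgue \<Omega> * ennreal (\<epsilon> powr q) +
        ennreal (1 + 1 / \<eta>) * (\<integral>\<^sup>+x\<in>\<Omega>. ennreal (\<bar>disc_fun \<Omega> G i u x - \<phi> x\<bar> powr q) \<partial>lebesgue))"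
proof -
  define I where "I p = (\<integral>\<^sup>+y\<in>subcell G (fst p) (snd p).
    ennreal (\<bar>disc_fun \<Omega> G i u y - \<phi> y\<bar> powr q) \<partial>lebesgue)" for p
  define J where "J k p = (if p \<in> interior_subcells \<Omega> G j then I (stencil_subcell i j k p) else 0)"
    for k p
  have "(\<integral>\<^sup>+x\<in>\<Omega>. ennreal (\<bar>R_EE \<Omega> G i j u x - \<phi> x\<bar> powr q) \<partial>lebesgue) =
      (\<Sum>p\<in>subcells \<Omega> G. \<integral>\<^sup>+x\<in>subcell G (fst p) (snd p).
        ennreal (\<bar>R_EE \<Omega> G i j u x - \<phi> x\<bar> powr q) \<partial>lebesgue)"
    by (rule set_nn_integral_eq_sum_subcells[OF G]) (use mphi borel_measurable_R_EE in measurable)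
  also have "\<dots> \<le> ennreal (2 powr (q - 1)) * (emeasure lebesgue \<Omega> * ennreal (\<epsilon> powr q) +
      of_nat (card (UNIV :: (bool \<times> bool) set)) * ennreal ((1 + 1 / \<eta>) / 4) *
      (\<Sum>p\<in>subcells \<Omega> G. I p))"
  proof (rule sum_subcells_estimate[OF G _ finite_class.finite_UNIV, where J = J])
    fix p assume "p \<in> subcells \<Omega> G"
    then obtain c s where p: "p = (c, s)" and c: "c \<in> mesh \<Omega> G" by (auto simp: subcells_def)
    show "(\<integral>\<^sup>+x\<in>subcell G (fst p) (snd p). ennreal (\<bar>R_EE \<Omega> G i j u x - \<phi> x\<bar> powr q) \<partial>lebesgue)
      \<le> ennreal (2 powr (q - 1)) * (emeasure lebesgue (subcell G (fst p) (snd p)) *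
        ennreal (\<epsilon> powr q) + (\<Sum>k\<in>UNIV. ennreal ((1 + 1 / \<eta>) / 4) * J k p))"
    proof (cases "p \<in> interior_subcells \<Omega> G j")
      case True
      then show ?thesis unfolding J_def I_def p
        using R_EE_subcell_estimate[OF G ne eta ij _ q \<epsilon> mphi close] by simp
    next
      case False
      then have "subcell_face c s j \<notin> int_faces \<Omega> G j"
        using c unfolding p interior_subcells_def subcells_def by auto
      then show ?thesis unfolding p
        using R_EE_boundary_subcell_integral_eq_0[OF G op c _ vanish q] by simp
    qed
  next
    fix k
    show "(\<Sum>p\<in>subcells \<Omega> G. J k p) \<le> (\<Sum>p\<in>subcells \<Omega> G. I p)"
      unfolding J_def by (rule sum_stencil_subcells_le)
  qed (use op in simp)
  also have "(\<Sum>p\<in>subcells \<Omega> G. I p) = (\<integral>\<^sup>+x\<in>\<Omega>. ennreal (\<bar>disc_fun \<Omega> G i u x - \<phi> x\<bar> powr q) \<partial>lebesgue)"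
    unfolding I_def
    by (rule set_nn_integral_eq_sum_subcells[OF G, symmetric])
       (use mphi borel_measurable_disc_fun in measurable)
  also have "of_nat (card (UNIV :: (bool \<times> bool) set)) * ennreal ((1 + 1 / \<eta>) / 4) = ennreal (1 + 1 / \<eta>)"
  proof -
    have "ennreal 4 * ennreal ((1 + 1 / \<eta>) / 4) = ennreal (4 * ((1 + 1 / \<eta>) / 4))"
      by (rule ennreal_mult[symmetric]) (use eta(1) in auto)
    also have "4 * ((1 + 1 / \<eta>) / 4) = 1 + 1 / \<eta>" by simp
    finally show ?thesis by (simp add: card_UNIV_bool)
  qed
  finally show ?thesis by (simp add: mult.assoc)
qed

section \<open>Density of continuous functions vanishing near the boundary\<close>

definition clip :: "real \<Rightarrow> real \<Rightarrow> real" where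
  "clip M t = max (- M) (min M t)"

definition boundary_cutoff :: "'a::metric_space set \<Rightarrow> nat \<Rightarrow> 'a \<Rightarrow> real" where
  "boundary_cutoff \<Omega> m x = min 1 (max 0 (real m * infdist x (- \<Omega>) - 1))"

lemma abs_clip_le: "0 \<le> M \<Longrightarrow> \<bar>clip M t\<bar> \<le> M"
  unfolding clip_def by auto

lemma clip_eq: "\<bar>t\<bar> \<le> M \<Longrightarrow> clip M t = t"
  unfolding clip_def by auto

lemma continuous_on_clip: "continuous_on UNIV (clip M)"
  unfolding clip_def by (intro continuous_intros)

lemma borel_measurable_clip:
  "f \<in> borel_measurable M \<Longrightarrow> (\<lambda>x. clip m (f x)) \<in> borel_measurable M"
  unfolding clip_def by (intro borel_measurable_max borel_measurable_min borel_measurable_const)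

lemma abs_clip_mult_diff_le:
  assumes "0 \<le> l" "l \<le> 1" "0 \<le> M"
  shows "\<bar>clip M t * l - t\<bar> \<le> \<bar>t\<bar>"
proof (cases "t \<ge> 0")
  case True
  then have "0 \<le> clip M t" "clip M t \<le> t" using assms unfolding clip_def by auto
  then have "0 \<le> clip M t * l" "clip M t * l \<le> t"
    using assms by (auto intro: order_trans[OF mult_left_le])
  then show ?thesis by auto
next
  case False
  then have "clip M t \<le> 0" "t \<le> clip M t" using assms unfolding clip_def by auto
  moreover from this have "clip M t * (l - 1) \<ge> 0" using assms by (intro mult_nonpos_nonpos) auto
  ultimately have "clip M t * l \<le> 0" "t \<le> clip M t * l"
    using assms mult_nonpos_nonneg[of "clip M t" l] by (auto simp: algebra_simps)
  then show ?thesis by auto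
qed

lemma abs_clip_mult_diff_clip_mult_le:
  assumes M: "0 \<le> M" and "0 \<le> l" "l \<le> 1"
  shows "\<bar>clip M a * l - clip M b * l\<bar> \<le> 2 * M"
proof -
  have bound: "\<bar>clip M t * l\<bar> \<le> M" for t
  proof -
    have "\<bar>clip M t * l\<bar> = \<bar>clip M t\<bar> * l" using assms(2) by (simp add: abs_mult)
    also have "\<dots> \<le> M * 1" using abs_clip_le[OF M] assms by (intro mult_mono) auto
    finally show ?thesis by simp
  qed
  then show ?thesis
    using bound[of a] bound[of b] abs_triangle_ineq4[of "clip M a * l" "clip M b * l"] by linarith
qed

lemma boundary_cutoff_bounds: "0 \<le> boundary_cutoff \<Omega> m x" "boundary_cutoff \<Omega> m x \<le> 1"
  unfolding boundary_cutoff_def by auto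

lemma boundary_cutoff_eq_0: "0 < m \<Longrightarrow> infdist x (- \<Omega>) \<le> 1 / real m \<Longrightarrow> boundary_cutoff \<Omega> m x = 0"
  unfolding boundary_cutoff_def by (auto simp: field_simps)

lemma continuous_on_boundary_cutoff: "continuous_on UNIV (boundary_cutoff \<Omega> m)"
  unfolding boundary_cutoff_def by (intro continuous_intros)

lemma clip_cutoff_eventually_eq:
  assumes "open \<Omega>" "\<Omega> \<noteq> UNIV" "x \<in> \<Omega>"
  shows "eventually (\<lambda>m. clip (real m) t * boundary_cutoff \<Omega> m x = t) sequentially"
proof -
  have d: "infdist x (- \<Omega>) > 0"
    using assms by (intro infdist_pos_not_in_closed) (auto simp: closed_Compl)
  obtain N :: nat where "max \<bar>t\<bar> (2 / infdist x (- \<Omega>)) \<le> real N" using real_arch_simple by blast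
  then have N: "\<bar>t\<bar> \<le> real N" "2 \<le> real N * infdist x (- \<Omega>)"
    using d by (auto simp: field_simps)
  have "clip (real m) t = t \<and> boundary_cutoff \<Omega> m x = 1" if "N \<le> m" for m
  proof -
    have "real N * infdist x (- \<Omega>) \<le> real m * infdist x (- \<Omega>)"
      using that d by (intro mult_right_mono) auto
    then show ?thesis
      using N that unfolding boundary_cutoff_def by (auto intro!: clip_eq)
  qed
  then show ?thesis unfolding eventually_sequentially by (intro exI[of _ N]) simp
qed

lemma borel_measurable_continuous_lebesgue:
  fixes f :: "'a::euclidean_space \<Rightarrow> 'b::euclidean_space"
  shows "continuous_on UNIV f \<Longrightarrow> f \<in> borel_measurable lebesgue"
  by (simp add: borel_measurable_continuous_onI measurable_completion)

lemma set_nn_integral_clip_cutoff_tendsto_0: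
  fixes v :: "'a::euclidean_space \<Rightarrow> real"
  assumes op: "open \<Omega>" and ne: "\<Omega> \<noteq> UNIV" and q: "q \<ge> 1"
    and v: "v \<in> borel_measurable lebesgue" "(\<integral>\<^sup>+x\<in>\<Omega>. ennreal (\<bar>v x\<bar> powr q) \<partial>lebesgue) < \<infinity>"
  shows "(\<lambda>m. \<integral>\<^sup>+x\<in>\<Omega>. ennreal (\<bar>clip (real m) (v x) * boundary_cutoff \<Omega> m x - v x\<bar> powr q)
    \<partial>lebesgue) \<longlonglongrightarrow> 0"
proof -
  let ?T = "\<lambda>m x. clip (real m) (v x) * boundary_cutoff \<Omega> m x"
  have Om: "\<Omega> \<in> sets lebesgue" using op by simp
  have "(\<lambda>m. \<integral>\<^sup>+x. ennreal (\<bar>?T m x - v x\<bar> powr q) * indicator \<Omega> x \<partial>lebesgue) \<longlonglongrightarrow>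
      (\<integral>\<^sup>+(x::'a). 0 \<partial>lebesgue)"
  proof (rule nn_integral_dominated_convergence[where w = "\<lambda>x. ennreal (\<bar>v x\<bar> powr q) * indicator \<Omega> x"
        and u = "\<lambda>m x. ennreal (\<bar>?T m x - v x\<bar> powr q) * indicator \<Omega> x" and u' = "\<lambda>x. 0"])
    show "(\<lambda>x. ennreal (\<bar>?T m x - v x\<bar> powr q) * indicator \<Omega> x) \<in> borel_measurable lebesgue" for m
      using borel_measurable_clip[OF v(1)]
        borel_measurable_continuous_lebesgue[OF continuous_on_boundary_cutoff] Om v(1)
      by measurable
    show "AE x in lebesgue. ennreal (\<bar>?T m x - v x\<bar> powr q) * indicator \<Omega> x \<le>
        ennreal (\<bar>v x\<bar> powr q) * indicator \<Omega> x" for m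
    proof (rule AE_I2)
      fix x
      have "\<bar>?T m x - v x\<bar> powr q \<le> \<bar>v x\<bar> powr q"
        using q abs_clip_mult_diff_le[OF boundary_cutoff_bounds, of "real m"] by (intro powr_mono2) auto
      then show "ennreal (\<bar>?T m x - v x\<bar> powr q) * indicator \<Omega> x \<le>
          ennreal (\<bar>v x\<bar> powr q) * indicator \<Omega> x"
        by (cases "x \<in> \<Omega>") (auto intro: ennreal_leI)
    qed
    show "AE x in lebesgue. (\<lambda>m. ennreal (\<bar>?T m x - v x\<bar> powr q) * indicator \<Omega> x) \<longlonglongrightarrow> 0"
    proof (rule AE_I2)
      fix x
      have "eventually (\<lambda>m. ennreal (\<bar>?T m x - v x\<bar> powr q) * indicator \<Omega> x = 0) sequentially"
        using clip_cutoff_eventually_eq[OF op ne, of x "v x"]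
        by (cases "x \<in> \<Omega>") (auto elim: eventually_mono)
      then show "(\<lambda>m. ennreal (\<bar>?T m x - v x\<bar> powr q) * indicator \<Omega> x) \<longlonglongrightarrow> 0"
        by (rule tendsto_eventually)
    qed
  qed (use v Om in auto)
  then show ?thesis by simp
qed

lemma exists_continuous_clip_approx:
  fixes f \<psi> :: "'a::euclidean_space \<Rightarrow> real"
  assumes Om: "\<Omega> \<in> sets lebesgue" "emeasure lebesgue \<Omega> < \<infinity>"
    and f: "f \<in> borel_measurable lebesgue" and M: "M \<ge> 0"
    and \<psi>: "\<psi> \<in> borel_measurable lebesgue" "\<And>x. 0 \<le> \<psi> x" "\<And>x. \<psi> x \<le> 1"
    and q: "q \<ge> 1" and a: "a > 0"
  obtains g where "continuous_on UNIV g"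
    "(\<integral>\<^sup>+x\<in>\<Omega>. ennreal (\<bar>clip M (g x) * \<psi> x - clip M (f x) * \<psi> x\<bar> powr q) \<partial>lebesgue) < ennreal a"
proof -
  have "f measurable_on \<Omega>" by (rule lebesgue_measurable_imp_measurable_on_real[OF f Om(1)])
  then obtain N g where N: "negligible N" and gc: "\<And>n. continuous_on UNIV (g n)"
    and lim: "\<And>x. x \<notin> N \<Longrightarrow> (\<lambda>n. g n x) \<longlonglongrightarrow> (if x \<in> \<Omega> then f x else 0)"
    unfolding measurable_on_def by blast
  let ?u = "\<lambda>n x. ennreal (\<bar>clip M (g n x) * \<psi> x - clip M (f x) * \<psi> x\<bar> powr q) * indicator \<Omega> x"
  have "(\<lambda>n. \<integral>\<^sup>+x. ?u n x \<partial>lebesgue) \<longlonglongrightarrow> (\<integral>\<^sup>+(x::'a). 0 \<partial>lebesgue)"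
  proof (rule nn_integral_dominated_convergence[where u = ?u and u' = "\<lambda>x. 0"
        and w = "\<lambda>x. ennreal ((2 * M) powr q) * indicator \<Omega> x"])
    show "?u n \<in> borel_measurable lebesgue" for n
      using borel_measurable_clip[OF borel_measurable_continuous_lebesgue[OF gc[of n]]]
        borel_measurable_clip[OF f] \<psi>(1) Om(1) by measurable
    show "(\<integral>\<^sup>+x. ennreal ((2 * M) powr q) * indicator \<Omega> x \<partial>lebesgue) < \<infinity>"
      using Om by (simp add: nn_integral_cmult_indicator ennreal_mult_less_top)
    show "AE x in lebesgue. ?u n x \<le> ennreal ((2 * M) powr q) * indicator \<Omega> x" for n
    proof (rule AE_I2)
      fix x
      have "\<bar>clip M (g n x) * \<psi> x - clip M (f x) * \<psi> x\<bar> \<le> 2 * M"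
        using M \<psi>(2,3) by (rule abs_clip_mult_diff_clip_mult_le)
      then have "\<bar>clip M (g n x) * \<psi> x - clip M (f x) * \<psi> x\<bar> powr q \<le> (2 * M) powr q"
        using q by (intro powr_mono2) auto
      then show "?u n x \<le> ennreal ((2 * M) powr q) * indicator \<Omega> x"
        by (cases "x \<in> \<Omega>") (auto intro: ennreal_leI)
    qed
    have "AE x in lebesgue. x \<notin> N" using N by (intro AE_not_in) (simp add: negligible_iff_null_sets)
    then show "AE x in lebesgue. (\<lambda>n. ?u n x) \<longlonglongrightarrow> 0"
    proof eventually_elim
      case (elim x)
      show ?case
      proof (cases "x \<in> \<Omega>")
        case True
        have "(\<lambda>n. clip M (g n x)) \<longlonglongrightarrow> clip M (f x)"
          using lim[OF elim] True unfolding clip_def by (intro tendsto_intros) simp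
        then have "(\<lambda>n. \<bar>clip M (g n x) * \<psi> x - clip M (f x) * \<psi> x\<bar>) \<longlonglongrightarrow> 0"
          by (intro tendsto_rabs_zero LIM_zero tendsto_intros)
        then have "(\<lambda>n. \<bar>clip M (g n x) * \<psi> x - clip M (f x) * \<psi> x\<bar> powr q) \<longlonglongrightarrow> 0"
          using q by (intro tendsto_zero_powrI) auto
        then show ?thesis using True by (simp add: tendsto_ennrealI[where x = 0, simplified])
      qed simp
    qed
  qed (use Om(1) in simp_all)
  then have "eventually (\<lambda>n. (\<integral>\<^sup>+x. ?u n x \<partial>lebesgue) < ennreal a) sequentially"
    using a by (intro order_tendstoD(2)) auto
  then obtain n where "(\<integral>\<^sup>+x. ?u n x \<partial>lebesgue) < ennreal a" by (auto simp: eventually_sequentially)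
  then show ?thesis using that[OF gc[of n]] by simp
qed

lemma exists_continuous_Lq_approx_vanishing_near_boundary:
  fixes v :: "'a::euclidean_space \<Rightarrow> real"
  assumes op: "open \<Omega>" and bd: "bounded \<Omega>" and q: "q \<ge> 1"
    and v: "v \<in> borel_measurable lebesgue" "(\<integral>\<^sup>+x\<in>\<Omega>. ennreal (\<bar>v x\<bar> powr q) \<partial>lebesgue) < \<infinity>"
    and a: "a > 0"
  obtains \<phi> \<delta> where "continuous_on UNIV \<phi>" "\<delta> > 0" "\<And>x. infdist x (- \<Omega>) \<le> \<delta> \<Longrightarrow> \<phi> x = 0"
    "(\<integral>\<^sup>+x\<in>\<Omega>. ennreal (\<bar>\<phi> x - v x\<bar> powr q) \<partial>lebesgue) \<le> ennreal a"
proof -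
  have Om: "\<Omega> \<in> sets lebesgue" using op by simp
  have fin: "emeasure lebesgue \<Omega> < \<infinity>"
    using emeasure_bounded_finite[OF bd] op by (simp add: emeasure_completion borel_open)
  have ne: "\<Omega> \<noteq> UNIV" using bd not_bounded_UNIV by blast
  define a' where "a' = a / 2 powr q"
  have a': "a' > 0" using a by (simp add: a'_def)
  let ?T = "\<lambda>m x. clip (real m) (v x) * boundary_cutoff \<Omega> m x"
  have "eventually (\<lambda>m. (\<integral>\<^sup>+x\<in>\<Omega>. ennreal (\<bar>?T m x - v x\<bar> powr q) \<partial>lebesgue) < ennreal a')
      sequentially"
    using a' by (intro order_tendstoD(2)[OF set_nn_integral_clip_cutoff_tendsto_0[OF op ne q v]]) auto
  then obtain m :: nat where m: "m \<ge> 1"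
    "(\<integral>\<^sup>+x\<in>\<Omega>. ennreal (\<bar>?T m x - v x\<bar> powr q) \<partial>lebesgue) < ennreal a'"
    unfolding eventually_sequentially by (metis le_add2 nat_le_linear)
  obtain g where g: "continuous_on UNIV g"
    "(\<integral>\<^sup>+x\<in>\<Omega>. ennreal (\<bar>clip (real m) (g x) * boundary_cutoff \<Omega> m x - ?T m x\<bar> powr q)
      \<partial>lebesgue) < ennreal a'"
    using exists_continuous_clip_approx[OF Om fin v(1) of_nat_0_le_iff
        borel_measurable_continuous_lebesgue[OF continuous_on_boundary_cutoff]
        boundary_cutoff_bounds(1)[of \<Omega> m] boundary_cutoff_bounds(2)[of \<Omega> m] q a']
    by blast
  define \<phi> where "\<phi> x = clip (real m) (g x) * boundary_cutoff \<Omega> m x" for x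
  have \<phi>: "continuous_on UNIV \<phi>"
    unfolding \<phi>_def
    by (intro continuous_intros continuous_on_compose2[OF continuous_on_clip g(1)]
        continuous_on_boundary_cutoff) auto
  have "(\<integral>\<^sup>+x\<in>\<Omega>. ennreal (\<bar>\<phi> x - v x\<bar> powr q) \<partial>lebesgue) \<le> ennreal (2 powr (q - 1)) *
      ((\<integral>\<^sup>+x\<in>\<Omega>. ennreal (\<bar>\<phi> x - ?T m x\<bar> powr q) \<partial>lebesgue) +
       (\<integral>\<^sup>+x\<in>\<Omega>. ennreal (\<bar>?T m x - v x\<bar> powr q) \<partial>lebesgue))"
    using borel_measurable_continuous_lebesgue[OF \<phi>] borel_measurable_clip[OF v(1)]
      borel_measurable_continuous_lebesgue[OF continuous_on_boundary_cutoff] v(1) Om q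
    by (intro set_nn_integral_dist_powr_triangle borel_measurable_times) auto
  also have "\<dots> \<le> ennreal (2 powr (q - 1)) * (ennreal a' + ennreal a')"
    using g(2) m(2) unfolding \<phi>_def by (intro mult_left_mono add_mono) auto
  also have "\<dots> = ennreal a"
  proof -
    have "2 powr (q - 1) * (a' + a') = a" unfolding a'_def by (simp add: powr_diff field_simps)
    then show ?thesis using a' by (simp flip: ennreal_plus ennreal_mult)
  qed
  finally have "(\<integral>\<^sup>+x\<in>\<Omega>. ennreal (\<bar>\<phi> x - v x\<bar> powr q) \<partial>lebesgue) \<le> ennreal a" .
  moreover have "\<phi> x = 0" if "infdist x (- \<Omega>) \<le> 1 / real m" for x
    using boundary_cutoff_eq_0[OF _ that] m(1) unfolding \<phi>_def by simp
  ultimately show ?thesis using that[OF \<phi>, of "1 / real m"] m(1) by simp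
qed

lemma ennreal_tendsto_zeroI:
  fixes X :: "nat \<Rightarrow> ennreal"
  assumes "\<And>e. e > 0 \<Longrightarrow> eventually (\<lambda>n. X n \<le> ennreal e) sequentially"
  shows "X \<longlonglongrightarrow> 0"
proof (rule order_tendstoI)
  fix a :: ennreal assume a: "0 < a"
  obtain e where e: "e > 0" "ennreal e < a"
  proof (cases "a = top")
    case True then show ?thesis using that[of 1] by simp
  next
    case False
    then obtain r where "a = ennreal r" "r > 0" using a by (cases a) auto
    then show ?thesis using that[of "r / 2"] by (simp add: ennreal_less_iff)
  qed
  show "eventually (\<lambda>n. X n < a) sequentially"
    using assms[OF e(1)] by eventually_elim (use e in auto)
qed simp

text \<open>Two triangle inequalities through \<open>\<phi>\<close> reduce the distance of \<open>R\<close> from \<open>v\<close> to the local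
  estimate of \<open>R\<close> against \<open>\<phi>\<close>.\<close>

lemma set_nn_integral_dist_via_approximant:
  fixes R w \<phi> v :: "'a \<Rightarrow> real" and q K B t :: real
  defines "K \<equiv> 2 powr (q - 1)"
  assumes meas: "R \<in> borel_measurable M" "w \<in> borel_measurable M" "\<phi> \<in> borel_measurable M"
      "v \<in> borel_measurable M" "\<Omega> \<in> sets M"
    and q: "q \<ge> 1" and B: "B \<ge> 0" and m: "m \<ge> 0" and t: "t \<ge> 0"
    and approx: "(\<integral>\<^sup>+x\<in>\<Omega>. ennreal (\<bar>\<phi> x - v x\<bar> powr q) \<partial>M) \<le> ennreal t"
    and close: "(\<integral>\<^sup>+x\<in>\<Omega>. ennreal (\<bar>w x - v x\<bar> powr q) \<partial>M) \<le> ennreal t"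
    and local: "(\<integral>\<^sup>+x\<in>\<Omega>. ennreal (\<bar>R x - \<phi> x\<bar> powr q) \<partial>M) \<le>
      ennreal K * (ennreal m * ennreal t + ennreal B * (\<integral>\<^sup>+x\<in>\<Omega>. ennreal (\<bar>w x - \<phi> x\<bar> powr q) \<partial>M))"
  shows "(\<integral>\<^sup>+x\<in>\<Omega>. ennreal (\<bar>R x - v x\<bar> powr q) \<partial>M) \<le>
    ennreal (t * (K * K * m + 2 * K * K * K * B + K))"
proof -
  have K: "K \<ge> 1" unfolding K_def using q by (intro ge_one_powr_ge_zero) auto
  have approx': "(\<integral>\<^sup>+x\<in>\<Omega>. ennreal (\<bar>v x - \<phi> x\<bar> powr q) \<partial>M) \<le> ennreal t"
    using approx by (simp add: abs_minus_commute)
  have "(\<integral>\<^sup>+x\<in>\<Omega>. ennreal (\<bar>w x - \<phi> x\<bar> powr q) \<partial>M) \<le> ennreal K * (ennreal t + ennreal t)"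
    using set_nn_integral_dist_powr_triangle[OF meas(2,4,3,5) q] close approx' unfolding K_def
    by (meson add_mono order_trans mult_left_mono zero_le)
  also have "\<dots> = ennreal (K * (t + t))" using K t by (simp flip: ennreal_plus ennreal_mult)
  finally have "(\<integral>\<^sup>+x\<in>\<Omega>. ennreal (\<bar>R x - \<phi> x\<bar> powr q) \<partial>M) \<le>
      ennreal K * (ennreal m * ennreal t + ennreal B * ennreal (K * (t + t)))"
    using local by (meson add_left_mono mult_left_mono order_trans zero_le)
  also have "\<dots> = ennreal (K * (m * t + B * (K * (t + t))))"
    using K B m t by (simp flip: ennreal_plus ennreal_mult)
  finally have "(\<integral>\<^sup>+x\<in>\<Omega>. ennreal (\<bar>R x - v x\<bar> powr q) \<partial>M) \<le>
      ennreal K * (ennreal (K * (m * t + B * (K * (t + t)))) + ennreal t)"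
    using set_nn_integral_dist_powr_triangle[OF meas(1,3,4,5) q] approx unfolding K_def
    by (meson add_mono order_trans mult_left_mono zero_le)
  also have "\<dots> = ennreal (K * (K * (m * t + B * (K * (t + t))) + t))"
    using K B m t by (simp flip: ennreal_plus ennreal_mult)
  also have "K * (K * (m * t + B * (K * (t + t))) + t) = t * (K * K * m + 2 * K * K * K * B + K)"
    by (simp add: algebra_simps)
  finally show ?thesis .
qed

lemma Lq_tendsto_of_local_estimates:
  fixes v :: "'a::euclidean_space \<Rightarrow> real" and R w :: "nat \<Rightarrow> 'a \<Rightarrow> real" and h :: "nat \<Rightarrow> real"
  assumes op: "open \<Omega>" and bd: "bounded \<Omega>" and q: "q \<ge> 1"
    and v: "v \<in> borel_measurable lebesgue" "(\<integral>\<^sup>+x\<in>\<Omega>. ennreal (\<bar>v x\<bar> powr q) \<partial>lebesgue) < \<infinity>"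
    and B: "B \<ge> 0" and h: "h \<longlonglongrightarrow> 0"
    and w: "(\<lambda>n. \<integral>\<^sup>+x\<in>\<Omega>. ennreal (\<bar>w n x - v x\<bar> powr q) \<partial>lebesgue) \<longlonglongrightarrow> 0"
    and mw: "\<And>n. w n \<in> borel_measurable lebesgue" and mR: "\<And>n. R n \<in> borel_measurable lebesgue"
    and local: "\<And>n \<phi> \<epsilon>. \<phi> \<in> borel_measurable lebesgue \<Longrightarrow> \<epsilon> \<ge> 0 \<Longrightarrow>
        (\<And>x y. x \<in> \<Omega> \<Longrightarrow> y \<in> \<Omega> \<Longrightarrow> dist x y \<le> 4 * h n \<Longrightarrow> \<bar>\<phi> x - \<phi> y\<bar> \<le> \<epsilon>) \<Longrightarrow>
        (\<And>x. infdist x (- \<Omega>) \<le> h n \<Longrightarrow> \<phi> x = 0) \<Longrightarrow>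
        (\<integral>\<^sup>+x\<in>\<Omega>. ennreal (\<bar>R n x - \<phi> x\<bar> powr q) \<partial>lebesgue) \<le>
        ennreal (2 powr (q - 1)) * (emeasure lebesgue \<Omega> * ennreal (\<epsilon> powr q) +
          ennreal B * (\<integral>\<^sup>+x\<in>\<Omega>. ennreal (\<bar>w n x - \<phi> x\<bar> powr q) \<partial>lebesgue))"
  shows "(\<lambda>n. \<integral>\<^sup>+x\<in>\<Omega>. ennreal (\<bar>R n x - v x\<bar> powr q) \<partial>lebesgue) \<longlonglongrightarrow> 0"
proof (rule ennreal_tendsto_zeroI)
  fix e :: real assume e: "e > 0"
  define K where "K = (2::real) powr (q - 1)"
  define m where "m = measure lebesgue \<Omega>"
  have m: "emeasure lebesgue \<Omega> = ennreal m" "m \<ge> 0"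
    using emeasure_bounded_finite[OF bd] op unfolding m_def
    by (auto simp: emeasure_eq_ennreal_measure emeasure_completion borel_open)
  define S where "S = K * K * m + 2 * K * K * K * B + K"
  have S: "S \<ge> 0" using m(2) B unfolding S_def K_def by simp
  define t where "t = e / (S + 1)"
  have t: "t > 0" "t * S \<le> e" using e S by (auto simp: t_def field_simps)
  obtain \<phi> \<delta>0 where \<phi>: "continuous_on UNIV \<phi>" and \<delta>0: "\<delta>0 > 0"
    and vanish: "\<And>x. infdist x (- \<Omega>) \<le> \<delta>0 \<Longrightarrow> \<phi> x = 0"
    and approx: "(\<integral>\<^sup>+x\<in>\<Omega>. ennreal (\<bar>\<phi> x - v x\<bar> powr q) \<partial>lebesgue) \<le> ennreal t"
    using exists_continuous_Lq_approx_vanishing_near_boundary[OF op bd q v t(1)] by blast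
  define \<epsilon> where "\<epsilon> = t powr (1 / q)"
  have \<epsilon>: "\<epsilon> > 0" "\<epsilon> powr q = t" using t q unfolding \<epsilon>_def by (auto simp: powr_powr)
  have "uniformly_continuous_on (closure \<Omega>) \<phi>"
    using \<phi> bd by (intro compact_uniformly_continuous) (auto intro: continuous_on_subset)
  then obtain \<delta> where \<delta>: "\<delta> > 0"
    and unif: "\<And>x y. x \<in> closure \<Omega> \<Longrightarrow> y \<in> closure \<Omega> \<Longrightarrow> dist y x < \<delta> \<Longrightarrow> dist (\<phi> y) (\<phi> x) < \<epsilon>"
    unfolding uniformly_continuous_on_def using \<epsilon>(1) by metis
  have "eventually (\<lambda>n. \<bar>h n\<bar> < min (\<delta> / 4) \<delta>0) sequentially"
    using h \<delta> \<delta>0 by (auto simp: tendsto_iff dest!: spec[of _ "min (\<delta> / 4) \<delta>0"])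
  moreover have "eventually (\<lambda>n. (\<integral>\<^sup>+x\<in>\<Omega>. ennreal (\<bar>w n x - v x\<bar> powr q) \<partial>lebesgue) < ennreal t)
      sequentially"
    using t by (intro order_tendstoD(2)[OF w]) auto
  ultimately show "eventually (\<lambda>n. (\<integral>\<^sup>+x\<in>\<Omega>. ennreal (\<bar>R n x - v x\<bar> powr q) \<partial>lebesgue) \<le> ennreal e)
      sequentially"
  proof eventually_elim
    case (elim n)
    have close: "\<bar>\<phi> x - \<phi> y\<bar> \<le> \<epsilon>" if "x \<in> \<Omega>" "y \<in> \<Omega>" "dist x y \<le> 4 * h n" for x y
      using unif[of x y] that elim(1) closure_subset by (force simp: dist_commute dist_real_def)
    have "(\<integral>\<^sup>+x\<in>\<Omega>. ennreal (\<bar>R n x - v x\<bar> powr q) \<partial>lebesgue) \<le> ennreal (t * S)"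
      unfolding S_def K_def
    proof (rule set_nn_integral_dist_via_approximant[OF mR mw borel_measurable_continuous_lebesgue[OF \<phi>]
          v(1) _ q B m(2) less_imp_le[OF t(1)] approx less_imp_le[OF elim(2)]])
      show "(\<integral>\<^sup>+x\<in>\<Omega>. ennreal (\<bar>R n x - \<phi> x\<bar> powr q) \<partial>lebesgue) \<le> ennreal (2 powr (q - 1)) *
          (ennreal m * ennreal t + ennreal B * (\<integral>\<^sup>+x\<in>\<Omega>. ennreal (\<bar>w n x - \<phi> x\<bar> powr q) \<partial>lebesgue))"
        using local[OF borel_measurable_continuous_lebesgue[OF \<phi>] less_imp_le[OF \<epsilon>(1)] close]
          vanish elim(1) \<epsilon>(2) m(1) by force
    qed (use op in simp)
    also have "\<dots> \<le> ennreal e" using t(2) by (rule ennreal_leI)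
    finally show ?case .
  qed
qed

lemma Lq_conv_of_local_estimates:
  fixes R w :: "nat \<Rightarrow> real^3 \<Rightarrow> real" and h :: "nat \<Rightarrow> real"
  assumes op: "open \<Omega>" and bd: "bounded \<Omega>" and q: "q \<ge> 1" and v: "in_Lq \<Omega> q v"
    and B: "B \<ge> 0" and h: "h \<longlonglongrightarrow> 0" and w: "Lq_conv \<Omega> q w v"
    and mw: "\<And>n. w n \<in> borel_measurable lebesgue" and mR: "\<And>n. R n \<in> borel_measurable lebesgue"
    and local: "\<And>n \<phi> \<epsilon>. \<phi> \<in> borel_measurable lebesgue \<Longrightarrow> \<epsilon> \<ge> 0 \<Longrightarrow>
        (\<And>x y. x \<in> \<Omega> \<Longrightarrow> y \<in> \<Omega> \<Longrightarrow> dist x y \<le> 4 * h n \<Longrightarrow> \<bar>\<phi> x - \<phi> y\<bar> \<le> \<epsilon>) \<Longrightarrow>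
        (\<And>x. infdist x (- \<Omega>) \<le> h n \<Longrightarrow> \<phi> x = 0) \<Longrightarrow>
        (\<integral>\<^sup>+x\<in>\<Omega>. ennreal (\<bar>R n x - \<phi> x\<bar> powr q) \<partial>lebesgue) \<le>
        ennreal (2 powr (q - 1)) * (emeasure lebesgue \<Omega> * ennreal (\<epsilon> powr q) +
          ennreal B * (\<integral>\<^sup>+x\<in>\<Omega>. ennreal (\<bar>w n x - \<phi> x\<bar> powr q) \<partial>lebesgue))"
  shows "Lq_conv \<Omega> q R v"
proof -
  define v' where "v' x = (if x \<in> \<Omega> then v x else 0)" for x
  have v': "v' \<in> borel_measurable lebesgue"
    unfolding v'_def using v op by (intro borel_measurable_if_I) (auto simp: in_Lq_def)
  have restrict: "(\<integral>\<^sup>+x\<in>\<Omega>. ennreal (\<bar>f x - v x\<bar> powr q) \<partial>lebesgue) =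
      (\<integral>\<^sup>+x\<in>\<Omega>. ennreal (\<bar>f x - v' x\<bar> powr q) \<partial>lebesgue)" for f
    by (rule nn_integral_cong) (simp add: v'_def indicator_def)
  have "(\<integral>\<^sup>+x\<in>\<Omega>. ennreal (\<bar>v' x\<bar> powr q) \<partial>lebesgue) < \<infinity>"
    using v restrict[of "\<lambda>_. 0"] unfolding in_Lq_def by simp
  with w show ?thesis
    unfolding Lq_conv_def restrict
    by (intro Lq_tendsto_of_local_estimates[OF op bd q v' _ B h _ mw mR local])
qed

theorem lemma7p2:
  fixes \<Omega> :: "(real^3) set" and G :: "nat \<Rightarrow> grid" and \<eta> q :: real
    and i j :: 3 and v :: "real^3 \<Rightarrow> real"
  assumes "MAC_compatible \<Omega>" and "\<Omega> \<noteq> {}"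
    and "\<forall>n. is_MAC_grid \<Omega> (G n)"
    and "(\<lambda>n. hM \<Omega> (G n)) \<longlonglongrightarrow> 0"
    and "\<eta> > 0" and "\<forall>n. etaM \<Omega> (G n) \<ge> \<eta>"
    and "1 \<le> q"
    and "in_Lq \<Omega> q v"
  shows "(\<forall>u. (\<forall>n. in_H0 \<Omega> (G n) i (u n)) \<longrightarrow>
              Lq_conv \<Omega> q (\<lambda>n. disc_fun \<Omega> (G n) i (u n)) v \<longrightarrow>
              Lq_conv \<Omega> q (\<lambda>n. R_EE \<Omega> (G n) i j (u n)) v)
       \<and> (\<forall>u. Lq_conv \<Omega> q (\<lambda>n. disc_fun \<Omega> (G n) i (u n)) v \<longrightarrow>
              Lq_conv \<Omega> q (\<lambda>n. R_M \<Omega> (G n) i (u n)) v)"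
proof (intro conjI allI impI)
  note G = assms(3)[rule_format] and eta = assms(5) assms(6)[rule_format]
  have op: "open \<Omega>" and bd: "bounded \<Omega>" using assms(1) unfolding MAC_compatible_def by auto
  note conv_of_local = Lq_conv_of_local_estimates[OF op bd assms(7,8) _ assms(4) _
      borel_measurable_disc_fun]
  fix u
  assume conv: "Lq_conv \<Omega> q (\<lambda>n. disc_fun \<Omega> (G n) i (u n)) v"
  show "Lq_conv \<Omega> q (\<lambda>n. R_M \<Omega> (G n) i (u n)) v"
    using R_M_local_estimate[OF G _ assms(7)] op
    by (intro conv_of_local[OF _ conv borel_measurable_R_M, of 1]) auto
  assume H0: "\<forall>n. in_H0 \<Omega> (G n) i (u n)"
  show "Lq_conv \<Omega> q (\<lambda>n. R_EE \<Omega> (G n) i j (u n)) v"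
  proof (cases "i = j")
    case True
    then show ?thesis using conv H0 by (simp add: R_EE_same_direction)
  next
    case False
    show ?thesis
      using R_EE_local_estimate[OF G op assms(2) eta False assms(7)] eta(1)
      by (intro conv_of_local[OF _ conv borel_measurable_R_EE, of "1 + 1 / \<eta>"]) auto
  qed
qed

end
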